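(* The set $\{S_\lambda:\lambda\in\Lambda^{\bullet}(n,r)\}$ is a complete set of representatives of the isomorphism classes of simple $\mathbf{S}_0(n,r)$-modules.
   Context: Setting: $n,r\ge 0$; $\Lambda(n,r)$ is the set of weak compositions of $r$ with $n$ parts, and $\Lambda^\bullet(n,r)$ the subset where $\lambda_i=0$ forces $\lambda_j=0$ for $j>i$. $M_n(r)$ is the set of $n\times n$ nonnegative integer matrices with entry sum $r$; $\mathrm{ro}(A),\mathrm{co}(A)$ are the row and column sum vectors; $E_{a,b}$ are matrix units; $D_\lambda=\mathrm{diag}(\lambda)$. $\mathbf{S}_0(n,r)=S_0(n,r)\otimes_{\mathbb Z}\mathbb C$ is the complex $0$-Schur algebra (the $q=0$ specialization of the Dipper–James $q$-Schur algebra), with Jensen–Su standard basis $\{e_A:A\in M_n(r)\}$: - $e_Ae_B=0$ unless $\mathrm{co}(A)=\mathrm{ro}(B)$, in which case $e_Ae_B=e_C$ for a unique $C$. - $k_\lambda=e_{D_\lambda}$ with $k_\lambda e_A=\delta_{\lambda,\mathrm{ro}(A)}e_A$ and $e_Ak_\lambda=\delta_{\lambda,\mathrm{co}(A)}e_A$. - $e_i=\sum_\lambda e_{D_\lambda-E_{i+1,i+1}+E_{i,i+1}}$ and $f_i=\sum_\lambda e_{D_\lambda-E_{i,i}+E_{i+1,i}}$ ($1\le i\le n-1$); the $e_i,f_i,k_\lambda$ generate $\mathbf S_0(n,r)$. - For $\mathrm{ro}(A)=\lambda$: $e_ie_A=e_{A+E_{i,p}-E_{i+1,p}}$ if $\lambda_{i+1}>0$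 ($p$ the largest $j$ with $a_{i+1,j}>0$), else $0$. - $f_ie_A=e_{A-E_{i,q}+E_{i+1,q}}$ if $\lambda_i>0$ ($q$ the smallest $j$ with $a_{i,j}>0$), else $0$. $P_\lambda$ (Jensen–Su–Yang): $\max(\lambda)$ is the set of strong compositions $\alpha$ of $n$ such that, cutting $\lambda$ into consecutive pieces of lengths $\alpha_1,\alpha_2,\dots$, each piece is $(0)$ or has nonzero first and last entries. A matrix is open if $a_{i,j}a_{i',j'}=0$ for $i<i'$, $j<j'$. $A$ is open on columns w.r.t. $\alpha$ if, for each block of consecutive column indices determined by $\alpha$, the matrix keeping only those columns (others zero) is open. $B^{\lambda,\alpha}=\{e_A:\mathrm{co}(A)=\lambda,\ A\text{ open on columns w.r.t. }\alpha\}$ and $B^\lambda=\{e_A:\mathrm{co}(A)=\lambda\}\setminus\bigcup_{\alpha\in\max(\lambda)\setminus\{(1^n)\}}B^{\lambda,\alpha}$. $P_\lambda=\mathbb CB^\lambda$ with $b\cdot e_A=e_B$ if $be_A=e_B$ in $S_0(n,r)$ and $e_B\in B^\lambda$, else $0$. It is known (Jensen–Su–Yang) that $\{P_\lambda:\lambda\in\Lambda^\bullet(n,r)\}$ is a complete set of representatives of the projective indecomposable $\mathbf S_0(n,r)$-modules. $\mathrm{cb}(\lambda)$ is the set of $n\times n$ column block diagonal matrices ($a_{i,j}>0\Rightarrow a_{i',s}=0$ for all $i'\le i$, $s>j$) with $\mathrm{co}(A)=\lambda$, and $\beta^\lambda=\{e_A:A\in\mathrm{cb}(\lambda)\}\subseteq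 B^\lambda$. $N_\lambda$ is the span of $B^\lambda\setminus\beta^\lambda$, which is a submodule of $P_\lambda$, and $S_\lambda:=P_\lambda/N_\lambda$. *)

theory Defs
  imports Complex_Main "HOL-Library.Function_Algebras"
begin

(* Conventions: indices are 0-based (rows/columns 0..n-1 instead of 1..n).
   An n x n matrix is a function nat => nat => nat vanishing outside {0..<n}^2;
   a weak composition is a function nat => nat vanishing from n on.          *)

type_synonym mat = "nat \<Rightarrow> nat \<Rightarrow> nat"
type_synonym vect = "mat \<Rightarrow> complex"   (* C-linear combinations of basis vectors e_A *)

definition mats :: "nat \<Rightarrow> nat \<Rightarrow> mat set" where
  "mats n r = {A. (\<forall>i j. (n \<le> i \<or> n \<le> j) \<longrightarrow> A i j = 0) \<and> (\<Sum>i<n. \<Sum>j<n. A i j) = r}"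

definition comps :: "nat \<Rightarrow> nat \<Rightarrow> (nat \<Rightarrow> nat) set" where
  "comps n r = {la. (\<forall>i. n \<le> i \<longrightarrow> la i = 0) \<and> (\<Sum>i<n. la i) = r}"

definition comps_bullet :: "nat \<Rightarrow> nat \<Rightarrow> (nat \<Rightarrow> nat) set" where
  "comps_bullet n r = {la \<in> comps n r. \<forall>i j. i < j \<longrightarrow> la i = 0 \<longrightarrow> la j = 0}"

definition ro :: "nat \<Rightarrow> mat \<Rightarrow> nat \<Rightarrow> nat" where
  "ro n A = (\<lambda>i. \<Sum>j<n. A i j)"

definition co :: "nat \<Rightarrow> mat \<Rightarrow> nat \<Rightarrow> nat" where
  "co n A = (\<lambda>j. \<Sum>i<n. A i j)"

definition mplus :: "mat \<Rightarrow> nat \<Rightarrow> nat \<Rightarrow> mat" where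
  "mplus A i j = A(i := (A i)(j := Suc (A i j)))"

definition mminus :: "mat \<Rightarrow> nat \<Rightarrow> nat \<Rightarrow> mat" where
  "mminus A i j = A(i := (A i)(j := A i j - 1))"

definition ebas :: "mat \<Rightarrow> vect" where
  "ebas A = (\<lambda>B. if B = A then 1 else 0)"

definition fscale :: "complex \<Rightarrow> vect \<Rightarrow> vect" where
  "fscale c v = (\<lambda>B. c * v B)"

definition lin_ext :: "nat \<Rightarrow> nat \<Rightarrow> (mat \<Rightarrow> vect) \<Rightarrow> vect \<Rightarrow> vect" where
  "lin_ext n r g v = (\<Sum>A\<in>mats n r. fscale (v A) (g A))"

(* left multiplication by the generators k_lambda, e_i, f_i on the basis e_A
   (the left regular representation of S_0(n,r)); e_i, f_i use rows i, i+1 *)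
definition K_op :: "nat \<Rightarrow> nat \<Rightarrow> (nat \<Rightarrow> nat) \<Rightarrow> vect \<Rightarrow> vect" where
  "K_op n r la = lin_ext n r (\<lambda>A. if ro n A = la then ebas A else 0)"

definition E_op :: "nat \<Rightarrow> nat \<Rightarrow> nat \<Rightarrow> vect \<Rightarrow> vect" where
  "E_op n r i = lin_ext n r (\<lambda>A. if 0 < ro n A (Suc i)
      then (let p = (GREATEST j. 0 < A (Suc i) j) in ebas (mminus (mplus A i p) (Suc i) p))
      else 0)"

definition F_op :: "nat \<Rightarrow> nat \<Rightarrow> nat \<Rightarrow> vect \<Rightarrow> vect" where
  "F_op n r i = lin_ext n r (\<lambda>A. if 0 < ro n A i
      then (let q = (LEAST j. 0 < A i j) in ebas (mplus (mminus A i q) (Suc i) q))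
      else 0)"

(* S_0(n,r) (complexified), realised faithfully as the algebra of operators on
   C M_n(r) generated by left multiplication by e_i, f_i, k_lambda *)
inductive_set S0 :: "nat \<Rightarrow> nat \<Rightarrow> (vect \<Rightarrow> vect) set" for n r where
  zero: "0 \<in> S0 n r"
| gen_k: "la \<in> comps n r \<Longrightarrow> K_op n r la \<in> S0 n r"
| gen_e: "Suc i < n \<Longrightarrow> E_op n r i \<in> S0 n r"
| gen_f: "Suc i < n \<Longrightarrow> F_op n r i \<in> S0 n r"
| add: "a \<in> S0 n r \<Longrightarrow> b \<in> S0 n r \<Longrightarrow> a + b \<in> S0 n r"
| smult: "a \<in> S0 n r \<Longrightarrow> (\<lambda>v. fscale c (a v)) \<in> S0 n r"
| mult: "a \<in> S0 n r \<Longrightarrow> b \<in> S0 n r \<Longrightarrow> a \<circ> b \<in> S0 n r"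

definition S0one :: "nat \<Rightarrow> nat \<Rightarrow> vect \<Rightarrow> vect" where
  "S0one n r = lin_ext n r ebas"

definition is_module :: "nat \<Rightarrow> nat \<Rightarrow> (complex \<Rightarrow> 'm::ab_group_add \<Rightarrow> 'm) \<Rightarrow> 'm set
     \<Rightarrow> ((vect \<Rightarrow> vect) \<Rightarrow> 'm \<Rightarrow> 'm) \<Rightarrow> bool" where
  "is_module n r sm M act \<longleftrightarrow>
     vector_space sm \<and> module.subspace sm M \<and>
     (\<forall>a\<in>S0 n r. \<forall>x\<in>M. act a x \<in> M) \<and>
     (\<forall>a\<in>S0 n r. \<forall>x\<in>M. \<forall>y\<in>M. act a (x + y) = act a x + act a y) \<and>
     (\<forall>a\<in>S0 n r. \<forall>c. \<forall>x\<in>M. act a (sm c x) = sm c (act a x)) \<and>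
     (\<forall>a\<in>S0 n r. \<forall>b\<in>S0 n r. \<forall>x\<in>M. act (a + b) x = act a x + act b x) \<and>
     (\<forall>a\<in>S0 n r. \<forall>c. \<forall>x\<in>M. act (\<lambda>v. fscale c (a v)) x = sm c (act a x)) \<and>
     (\<forall>a\<in>S0 n r. \<forall>b\<in>S0 n r. \<forall>x\<in>M. act (a \<circ> b) x = act a (act b x)) \<and>
     (\<forall>x\<in>M. act (S0one n r) x = x)"

definition is_submodule :: "nat \<Rightarrow> nat \<Rightarrow> (complex \<Rightarrow> 'm::ab_group_add \<Rightarrow> 'm) \<Rightarrow> 'm set
     \<Rightarrow> ((vect \<Rightarrow> vect) \<Rightarrow> 'm \<Rightarrow> 'm) \<Rightarrow> 'm set \<Rightarrow> bool" where
  "is_submodule n r sm M act N \<longleftrightarrow>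
     N \<subseteq> M \<and> module.subspace sm N \<and> (\<forall>a\<in>S0 n r. \<forall>x\<in>N. act a x \<in> N)"

definition is_simple_module :: "nat \<Rightarrow> nat \<Rightarrow> (complex \<Rightarrow> 'm::ab_group_add \<Rightarrow> 'm) \<Rightarrow> 'm set
     \<Rightarrow> ((vect \<Rightarrow> vect) \<Rightarrow> 'm \<Rightarrow> 'm) \<Rightarrow> bool" where
  "is_simple_module n r sm M act \<longleftrightarrow>
     is_module n r sm M act \<and> M \<noteq> {0} \<and>
     (\<forall>N. is_submodule n r sm M act N \<longrightarrow> N = {0} \<or> N = M)"

definition module_iso :: "nat \<Rightarrow> nat
     \<Rightarrow> (complex \<Rightarrow> 'm::ab_group_add \<Rightarrow> 'm) \<Rightarrow> 'm set \<Rightarrow> ((vect \<Rightarrow> vect) \<Rightarrow> 'm \<Rightarrow> 'm)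
     \<Rightarrow> (complex \<Rightarrow> 'k::ab_group_add \<Rightarrow> 'k) \<Rightarrow> 'k set \<Rightarrow> ((vect \<Rightarrow> vect) \<Rightarrow> 'k \<Rightarrow> 'k) \<Rightarrow> bool" where
  "module_iso n r sm M act sm' M' act' \<longleftrightarrow>
     (\<exists>f. bij_betw f M M' \<and>
          (\<forall>x\<in>M. \<forall>y\<in>M. f (x + y) = f x + f y) \<and>
          (\<forall>c. \<forall>x\<in>M. f (sm c x) = sm' c (f x)) \<and>
          (\<forall>a\<in>S0 n r. \<forall>x\<in>M. f (act a x) = act' a (f x)))"

definition strong_comps :: "nat \<Rightarrow> nat list set" where
  "strong_comps n = {al. (\<forall>k\<in>set al. 0 < k) \<and> sum_list al = n}"

definition piece_start :: "nat list \<Rightarrow> nat \<Rightarrow> nat" where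
  "piece_start al k = sum_list (take k al)"

definition maxset :: "nat \<Rightarrow> (nat \<Rightarrow> nat) \<Rightarrow> nat list set" where
  "maxset n la = {al \<in> strong_comps n. \<forall>k<length al.
      (al ! k = 1 \<and> la (piece_start al k) = 0) \<or>
      (la (piece_start al k) \<noteq> 0 \<and> la (piece_start al k + al ! k - 1) \<noteq> 0)}"

definition open_on_cols :: "mat \<Rightarrow> nat set \<Rightarrow> bool" where
  "open_on_cols A J \<longleftrightarrow>
     (\<forall>i i' j j'. i < i' \<longrightarrow> j < j' \<longrightarrow> j \<in> J \<longrightarrow> j' \<in> J \<longrightarrow> A i j * A i' j' = 0)"

definition open_cols_wrt :: "mat \<Rightarrow> nat list \<Rightarrow> bool" where
  "open_cols_wrt A al \<longleftrightarrow>
     (\<forall>k<length al. open_on_cols A {piece_start al k ..< piece_start al k + al ! k})"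

definition B_la_al :: "nat \<Rightarrow> nat \<Rightarrow> (nat \<Rightarrow> nat) \<Rightarrow> nat list \<Rightarrow> mat set" where
  "B_la_al n r la al = {A \<in> mats n r. co n A = la \<and> open_cols_wrt A al}"

definition B_la :: "nat \<Rightarrow> nat \<Rightarrow> (nat \<Rightarrow> nat) \<Rightarrow> mat set" where
  "B_la n r la = {A \<in> mats n r. co n A = la}
      - (\<Union>al \<in> maxset n la - {replicate n 1}. B_la_al n r la al)"

definition cb :: "nat \<Rightarrow> nat \<Rightarrow> (nat \<Rightarrow> nat) \<Rightarrow> mat set" where
  "cb n r la = {A \<in> mats n r. co n A = la \<and>
      (\<forall>i j. 0 < A i j \<longrightarrow> (\<forall>i' s. i' \<le> i \<longrightarrow> j < s \<longrightarrow> A i' s = 0))}"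

definition proj :: "mat set \<Rightarrow> vect \<Rightarrow> vect" where
  "proj X v = (\<lambda>B. if B \<in> X then v B else 0)"

definition span_of :: "mat set \<Rightarrow> vect set" where
  "span_of X = {v. \<forall>B. B \<notin> X \<longrightarrow> v B = 0}"

(* P_lambda = C B^lambda, with b.e_A = e_B if e_B in B^lambda, else 0 *)
definition P_carrier :: "nat \<Rightarrow> nat \<Rightarrow> (nat \<Rightarrow> nat) \<Rightarrow> vect set" where
  "P_carrier n r la = span_of (B_la n r la)"

definition P_act :: "nat \<Rightarrow> nat \<Rightarrow> (nat \<Rightarrow> nat) \<Rightarrow> (vect \<Rightarrow> vect) \<Rightarrow> vect \<Rightarrow> vect" where
  "P_act n r la a v = proj (B_la n r la) (a v)"

definition N_carrier :: "nat \<Rightarrow> nat \<Rightarrow> (nat \<Rightarrow> nat) \<Rightarrow> vect set" where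
  "N_carrier n r la = span_of (B_la n r la - cb n r la)"

(* S_lambda = P_lambda / N_lambda, realised on the complementary basis
   B^lambda \<inter> beta^lambda of N_lambda in P_lambda (coset v + N_lambda
   represented by its unique representative in span(B^lambda \<inter> beta^lambda)) *)
definition S_carrier :: "nat \<Rightarrow> nat \<Rightarrow> (nat \<Rightarrow> nat) \<Rightarrow> vect set" where
  "S_carrier n r la = span_of (B_la n r la \<inter> cb n r la)"

definition S_act :: "nat \<Rightarrow> nat \<Rightarrow> (nat \<Rightarrow> nat) \<Rightarrow> (vect \<Rightarrow> vect) \<Rightarrow> vect \<Rightarrow> vect" where
  "S_act n r la a v = proj (B_la n r la \<inter> cb n r la) (P_act n r la a v)"

end

(*
  Simple S_0(n,r)-modules are classified by highest weights.  In S_lambda the basis vectors e_A,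
  A in beta^lambda, are weight vectors of pairwise distinct weights ro(A), since a column block
  diagonal matrix is determined by its row and column sums; every such A other than D_lambda is
  reached from D_lambda by some f_i and sent back by e_i.  So a nonzero submodule contains some
  e_A, hence e_(D_lambda), hence everything: S_lambda is simple, and lambda is its only highest
  weight, so the S_lambda are pairwise non-isomorphic.

  Conversely, a simple module M has a nonzero weight vector x whose weight lambda minimises
  sum_i i * lambda_i.  Then every e_i kills x, and f_i e_i k_lambda = k_lambda for
  lambda_i = 0 < lambda_(i+1) forces lambda into Lambda^bullet(n,r).  On a highest weight vector
  of weight lambda, k_lambda a acts by a scalar (the words in the f_i applied to it span an
  invariant subspace), and applying this to the pair (x, e_(D_lambda)) in M x S_lambda shows that
  x and e_(D_lambda) have the same annihilator; both modules being simple, M is isomorphic to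
  S_lambda.
*)

theory Submission
  imports Defs "HOL-Library.FuncSet" "HOL-Library.Product_Plus"
begin

section \<open>Operators on the space spanned by the matrices\<close>

lemma sum_fun_apply: "(\<Sum>a\<in>A. f a) x = (\<Sum>a\<in>A. f a x)"
  by (induction A rule: infinite_finite_induct) auto

lemma finite_mats: "finite (mats n r)"
proof -
  let ?h = "\<lambda>A::mat. restrict (\<lambda>i. restrict (A i) {..<n}) {..<n}"
  have "?h ` mats n r \<subseteq> PiE {..<n} (\<lambda>_. PiE {..<n} (\<lambda>_. {..r}))"
  proof
    fix F assume "F \<in> ?h ` mats n r"
    then obtain A where A: "A \<in> mats n r" "F = ?h A" by auto
    have "A i j \<le> r" if "i < n" "j < n" for i j
    proof -
      have "A i j \<le> (\<Sum>j<n. A i j)" using that by (intro member_le_sum) auto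
      also have "\<dots> \<le> (\<Sum>i<n. \<Sum>j<n. A i j)" using that by (intro member_le_sum) auto
      finally show ?thesis using A by (simp add: mats_def)
    qed
    then show "F \<in> PiE {..<n} (\<lambda>_. PiE {..<n} (\<lambda>_. {..r}))" using A by (auto simp: PiE_iff)
  qed
  moreover have "inj_on ?h (mats n r)"
  proof
    fix A B assume AB: "A \<in> mats n r" "B \<in> mats n r" "?h A = ?h B"
    show "A = B"
    proof (intro ext)
      fix i j
      show "A i j = B i j"
      proof (cases "i < n \<and> j < n")
        case True
        then show ?thesis using fun_cong[OF fun_cong[OF AB(3), of i], of j] by simp
      next
        case False
        then show ?thesis using AB by (auto simp: mats_def)
      qed
    qed
  qed
  ultimately show ?thesis
    by (metis finite_PiE finite_atMost finite_lessThan finite_subset finite_imageD)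
qed

lemma fscale_apply [simp]: "fscale c v B = c * v B"
  by (simp add: fscale_def)

lemma fscale_zero_right [simp]: "fscale c 0 = 0"
  by (simp add: fscale_def zero_fun_def)

lemma fscale_zero_left [simp]: "fscale 0 v = 0"
  by (simp add: fscale_def zero_fun_def)

lemma fscale_one [simp]: "fscale 1 v = v"
  by (simp add: fscale_def)

lemma vector_space_fscale: "vector_space fscale"
  unfolding vector_space_def by (simp add: fscale_def fun_eq_iff algebra_simps)

lemma module_fscale: "module fscale"
  using vector_space_fscale by (simp add: module_iff_vector_space)

lemma ebas_neq_zero: "ebas A \<noteq> 0"
  by (auto simp: ebas_def fun_eq_iff)

lemma lin_ext_apply: "lin_ext n r g v B = (\<Sum>A\<in>mats n r. v A * g A B)"
  by (simp add: lin_ext_def sum_fun_apply)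

lemma lin_ext_ebas: "A \<in> mats n r \<Longrightarrow> lin_ext n r g (ebas A) = g A"
proof (rule ext)
  fix B assume A: "A \<in> mats n r"
  have "lin_ext n r g (ebas A) B = (\<Sum>A'\<in>mats n r. if A' = A then g A' B else 0)"
    by (auto simp: lin_ext_apply ebas_def intro!: sum.cong)
  also have "\<dots> = g A B" using A by (simp add: finite_mats)
  finally show "lin_ext n r g (ebas A) B = g A B" .
qed

lemma lin_ext_cong: "(\<And>A. A \<in> mats n r \<Longrightarrow> g A = h A) \<Longrightarrow> lin_ext n r g = lin_ext n r h"
  by (intro ext) (simp add: lin_ext_apply)

definition linear_op :: "(vect \<Rightarrow> vect) \<Rightarrow> bool" where
  "linear_op T \<longleftrightarrow> (\<forall>v w. T (v + w) = T v + T w) \<and> (\<forall>c v. T (fscale c v) = fscale c (T v))"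

lemma linear_op_add: "linear_op T \<Longrightarrow> T (v + w) = T v + T w"
  by (simp add: linear_op_def)

lemma linear_op_scale: "linear_op T \<Longrightarrow> T (fscale c v) = fscale c (T v)"
  by (simp add: linear_op_def)

lemma linear_op_zero: "linear_op T \<Longrightarrow> T 0 = 0"
  using linear_op_scale[of T 0 0] by simp

lemma linear_op_sum: "linear_op T \<Longrightarrow> T (\<Sum>a\<in>A. f a) = (\<Sum>a\<in>A. T (f a))"
  by (induction A rule: infinite_finite_induct) (auto simp: linear_op_zero linear_op_add)

lemma linear_op_comp: "linear_op T1 \<Longrightarrow> linear_op T2 \<Longrightarrow> linear_op (T1 \<circ> T2)"
  by (simp add: linear_op_def)

lemma linear_op_lin_ext: "linear_op (lin_ext n r g)"
  unfolding linear_op_def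
  by (auto simp: lin_ext_apply sum.distrib sum_distrib_left algebra_simps intro!: ext)

lemma linear_op_comp_lin_ext: "linear_op T \<Longrightarrow> T \<circ> lin_ext n r g = lin_ext n r (\<lambda>A. T (g A))"
  by (intro ext) (simp add: lin_ext_def linear_op_sum linear_op_scale sum_fun_apply)

text \<open>The \<open>e\<^sub>A\<close> do not span \<open>vect\<close>, so linear operators are not determined by their values
  on them; linear extensions are, which is how identities in \<open>S\<^sub>0(n,r)\<close> are verified.\<close>

definition is_lin_ext :: "nat \<Rightarrow> nat \<Rightarrow> (vect \<Rightarrow> vect) \<Rightarrow> bool" where
  "is_lin_ext n r T \<longleftrightarrow> (\<exists>g. T = lin_ext n r g)"

lemma is_lin_ext_self: "is_lin_ext n r T \<Longrightarrow> T = lin_ext n r (\<lambda>A. T (ebas A))"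
  unfolding is_lin_ext_def by (auto intro!: lin_ext_cong simp: lin_ext_ebas)

lemma is_lin_ext_eqI:
  assumes "is_lin_ext n r T1" "is_lin_ext n r T2"
    and "\<And>A. A \<in> mats n r \<Longrightarrow> T1 (ebas A) = T2 (ebas A)"
  shows "T1 = T2"
  using assms is_lin_ext_self by (metis lin_ext_cong)

lemma is_lin_ext_linear: "is_lin_ext n r T \<Longrightarrow> linear_op T"
  by (auto simp: is_lin_ext_def linear_op_lin_ext)

lemma is_lin_ext_comp: "linear_op T1 \<Longrightarrow> is_lin_ext n r T2 \<Longrightarrow> is_lin_ext n r (T1 \<circ> T2)"
  unfolding is_lin_ext_def by (auto simp: linear_op_comp_lin_ext)

lemma is_lin_ext_add:
  assumes "is_lin_ext n r T1" "is_lin_ext n r T2"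
  shows "is_lin_ext n r (T1 + T2)"
proof -
  obtain g1 g2 where g: "T1 = lin_ext n r g1" "T2 = lin_ext n r g2"
    using assms is_lin_ext_def by blast
  have "T1 + T2 = lin_ext n r (\<lambda>A. g1 A + g2 A)"
    by (intro ext) (simp add: g lin_ext_apply sum.distrib algebra_simps)
  then show ?thesis by (auto simp: is_lin_ext_def)
qed

lemma is_lin_ext_smult:
  assumes "is_lin_ext n r T"
  shows "is_lin_ext n r (\<lambda>v. fscale c (T v))"
proof -
  obtain g where g: "T = lin_ext n r g" using assms is_lin_ext_def by blast
  have "(\<lambda>v. fscale c (T v)) = lin_ext n r (\<lambda>A. fscale c (g A))"
    by (intro ext) (simp add: g lin_ext_apply sum_distrib_left algebra_simps)
  then show ?thesis by (auto simp: is_lin_ext_def)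
qed

lemma is_lin_ext_zero: "is_lin_ext n r 0"
  unfolding is_lin_ext_def by (auto intro!: exI[of _ "\<lambda>A. 0"] ext simp: lin_ext_apply)

lemma is_lin_ext_sum:
  "finite A \<Longrightarrow> (\<And>i. i \<in> A \<Longrightarrow> is_lin_ext n r (f i)) \<Longrightarrow> is_lin_ext n r (\<Sum>i\<in>A. f i)"
  by (induction A rule: finite_induct) (auto intro: is_lin_ext_zero is_lin_ext_add)

lemma is_lin_ext_K: "is_lin_ext n r (K_op n r la)"
  by (auto simp: is_lin_ext_def K_op_def)

lemma is_lin_ext_E: "is_lin_ext n r (E_op n r i)"
  by (auto simp: is_lin_ext_def E_op_def)

lemma is_lin_ext_F: "is_lin_ext n r (F_op n r i)"
  by (auto simp: is_lin_ext_def F_op_def)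

lemma linear_op_K: "linear_op (K_op n r la)"
  by (rule is_lin_ext_linear[OF is_lin_ext_K])

lemma linear_op_E: "linear_op (E_op n r i)"
  by (rule is_lin_ext_linear[OF is_lin_ext_E])

lemma linear_op_F: "linear_op (F_op n r i)"
  by (rule is_lin_ext_linear[OF is_lin_ext_F])

lemmas is_lin_ext_intros = is_lin_ext_K is_lin_ext_E is_lin_ext_F is_lin_ext_zero
  is_lin_ext_comp linear_op_comp linear_op_K linear_op_E linear_op_F

lemma S0_is_lin_ext: "a \<in> S0 n r \<Longrightarrow> is_lin_ext n r a"
proof (induction rule: S0.induct)
  case (mult a b)
  then show ?case by (intro is_lin_ext_comp is_lin_ext_linear)
qed (rule is_lin_ext_zero is_lin_ext_K is_lin_ext_E is_lin_ext_F is_lin_ext_add is_lin_ext_smult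
    | assumption)+

lemma S0_linear: "a \<in> S0 n r \<Longrightarrow> linear_op a"
  using S0_is_lin_ext is_lin_ext_linear by blast

section \<open>Moving one unit of a matrix entry\<close>

text \<open>\<open>move_unit A a b c = A - E\<^sub>a\<^sub>,\<^sub>b + E\<^sub>c\<^sub>,\<^sub>b\<close>; \<open>E_move A i\<close> and \<open>F_move A i\<close> are the
  matrices in the multiplication rules for \<open>e\<^sub>i e\<^sub>A\<close> and \<open>f\<^sub>i e\<^sub>A\<close>.\<close>

definition move_unit :: "mat \<Rightarrow> nat \<Rightarrow> nat \<Rightarrow> nat \<Rightarrow> mat" where
  "move_unit A a b c =
    (\<lambda>k l. if l = b \<and> k = c then Suc (A k l) else if l = b \<and> k = a then A k l - 1 else A k l)"

definition last_pos :: "mat \<Rightarrow> nat \<Rightarrow> nat" where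
  "last_pos A k = (GREATEST j. 0 < A k j)"

definition first_pos :: "mat \<Rightarrow> nat \<Rightarrow> nat" where
  "first_pos A k = (LEAST j. 0 < A k j)"

definition E_move :: "mat \<Rightarrow> nat \<Rightarrow> mat" where
  "E_move A i = move_unit A (Suc i) (last_pos A (Suc i)) i"

definition F_move :: "mat \<Rightarrow> nat \<Rightarrow> mat" where
  "F_move A i = move_unit A i (first_pos A i) (Suc i)"

definition F_shift :: "(nat \<Rightarrow> nat) \<Rightarrow> nat \<Rightarrow> nat \<Rightarrow> nat" where
  "F_shift la i = la(i := la i - 1, Suc i := la (Suc i) + 1)"

definition E_shift :: "(nat \<Rightarrow> nat) \<Rightarrow> nat \<Rightarrow> nat \<Rightarrow> nat" where
  "E_shift la i = la(i := la i + 1, Suc i := la (Suc i) - 1)"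

lemma mats_zero: "A \<in> mats n r \<Longrightarrow> n \<le> i \<or> n \<le> j \<Longrightarrow> A i j = 0"
  by (auto simp: mats_def)

lemma mats_pos_bound: "A \<in> mats n r \<Longrightarrow> 0 < A i j \<Longrightarrow> i < n \<and> j < n"
  using mats_zero by (metis less_irrefl not_le)

lemma ro_pos_iff:
  assumes "A \<in> mats n r"
  shows "0 < ro n A k \<longleftrightarrow> (\<exists>j. 0 < A k j)"
proof
  assume "0 < ro n A k"
  then show "\<exists>j. 0 < A k j" unfolding ro_def by (metis gr0I sum.neutral less_irrefl)
next
  assume "\<exists>j. 0 < A k j"
  then obtain j where j: "0 < A k j" by blast
  then have "j < n" using mats_pos_bound[OF assms] by blast
  then have "A k j \<le> ro n A k" unfolding ro_def by (intro member_le_sum) auto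
  then show "0 < ro n A k" using j by simp
qed

lemma co_pos_iff:
  assumes "A \<in> mats n r"
  shows "0 < co n A k \<longleftrightarrow> (\<exists>i. 0 < A i k)"
proof
  assume "0 < co n A k"
  then show "\<exists>i. 0 < A i k" unfolding co_def by (metis gr0I sum.neutral less_irrefl)
next
  assume "\<exists>i. 0 < A i k"
  then obtain i where i: "0 < A i k" by blast
  then have "i < n" using mats_pos_bound[OF assms] by blast
  then have "A i k \<le> co n A k" unfolding co_def by (intro member_le_sum) auto
  then show "0 < co n A k" using i by simp
qed

lemma last_pos_props:
  assumes "A \<in> mats n r" "0 < A k j0"
  shows "0 < A k (last_pos A k)" "last_pos A k < n" "\<And>j. 0 < A k j \<Longrightarrow> j \<le> last_pos A k"
proof -
  have b: "\<forall>y. 0 < A k y \<longrightarrow> y \<le> n" using mats_pos_bound[OF assms(1)] by (meson less_imp_le)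
  show "0 < A k (last_pos A k)"
    unfolding last_pos_def
    by (rule GreatestI_nat[of "\<lambda>j. 0 < A k j" j0 n, OF assms(2)]) (use b in auto)
  then show "last_pos A k < n" using mats_pos_bound[OF assms(1)] by blast
  show "\<And>j. 0 < A k j \<Longrightarrow> j \<le> last_pos A k"
    unfolding last_pos_def by (rule Greatest_le_nat[of "\<lambda>j. 0 < A k j" _ n]) (use b in auto)
qed

lemma last_pos_eq: "0 < A k p \<Longrightarrow> (\<And>j. 0 < A k j \<Longrightarrow> j \<le> p) \<Longrightarrow> last_pos A k = p"
  unfolding last_pos_def by (rule Greatest_equality) auto

lemma first_pos_props:
  assumes "0 < A k j0"
  shows "0 < A k (first_pos A k)" "\<And>j. 0 < A k j \<Longrightarrow> first_pos A k \<le> j"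
  unfolding first_pos_def by (rule LeastI[of "\<lambda>j. 0 < A k j", OF assms]) (rule Least_le)

lemma first_pos_eq: "0 < A k p \<Longrightarrow> (\<And>j. 0 < A k j \<Longrightarrow> p \<le> j) \<Longrightarrow> first_pos A k = p"
  unfolding first_pos_def by (rule Least_equality) auto

lemma sum_fun_upd_add:
  fixes f :: "nat \<Rightarrow> nat"
  assumes b: "b < n"
  shows "(\<Sum>l<n. (f(b := v)) l) + f b = (\<Sum>l<n. f l) + v"
proof -
  have "(\<Sum>l<n. (f(b := v)) l) = v + (\<Sum>l\<in>{..<n}-{b}. f l)"
    using b by (subst sum.remove[of "{..<n}" b]) auto
  moreover have "(\<Sum>l<n. f l) = f b + (\<Sum>l\<in>{..<n}-{b}. f l)"
    using b by (subst sum.remove[of "{..<n}" b]) auto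
  ultimately show ?thesis by simp
qed

lemma move_unit_target_row: "a \<noteq> c \<Longrightarrow> move_unit A a b c c = (A c)(b := Suc (A c b))"
  by (auto simp: move_unit_def)

lemma move_unit_source_row: "a \<noteq> c \<Longrightarrow> move_unit A a b c a = (A a)(b := A a b - 1)"
  by (auto simp: move_unit_def)

lemma move_unit_other_row: "k \<noteq> a \<Longrightarrow> k \<noteq> c \<Longrightarrow> move_unit A a b c k = A k"
  by (auto simp: move_unit_def)

lemma ro_move_unit:
  assumes "a \<noteq> c" "b < n" "0 < A a b"
  shows "ro n (move_unit A a b c) = (ro n A)(a := ro n A a - 1, c := ro n A c + 1)"
proof
  fix k
  show "ro n (move_unit A a b c) k = ((ro n A)(a := ro n A a - 1, c := ro n A c + 1)) k"
  proof (cases "k = c")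
    case True
    then show ?thesis using sum_fun_upd_add[OF assms(2), of "A c" "Suc (A c b)"] assms
      by (simp add: ro_def move_unit_target_row)
  next
    case k_ne_c: False
    show ?thesis
    proof (cases "k = a")
      case True
      have "(\<Sum>l<n. A a l) \<ge> A a b" using assms by (intro member_le_sum) auto
      then show ?thesis
        using sum_fun_upd_add[OF assms(2), of "A a" "A a b - 1"] assms True k_ne_c
        by (simp add: ro_def move_unit_source_row)
    next
      case False
      then show ?thesis using k_ne_c by (simp add: ro_def move_unit_other_row)
    qed
  qed
qed

lemma co_move_unit:
  assumes "a \<noteq> c" "a < n" "c < n" "0 < A a b"
  shows "co n (move_unit A a b c) = co n A"
proof
  fix l
  show "co n (move_unit A a b c) l = co n A l"
  proof (cases "l = b")
    case False
    then show ?thesis by (simp add: co_def move_unit_def)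
  next
    case True
    let ?g = "(\<lambda>k. A k b)(a := A a b - 1)"
    have col_b: "(\<lambda>k. move_unit A a b c k b) = ?g(c := Suc (A c b))"
      using assms by (auto simp: move_unit_def)
    have "(\<Sum>k<n. (?g(c := Suc (A c b))) k) + ?g c = (\<Sum>k<n. ?g k) + Suc (A c b)"
      by (rule sum_fun_upd_add[OF assms(3)])
    moreover have "(\<Sum>k<n. ?g k) + A a b = (\<Sum>k<n. A k b) + (A a b - 1)"
      using sum_fun_upd_add[OF assms(2), of "\<lambda>k. A k b" "A a b - 1"] by simp
    moreover have "(\<Sum>k<n. move_unit A a b c k b) = (\<Sum>k<n. (?g(c := Suc (A c b))) k)"
      by (rule sum.cong[OF refl]) (metis col_b)
    ultimately show ?thesis using True assms by (simp add: co_def)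
  qed
qed

lemma move_unit_mats:
  assumes A: "A \<in> mats n r" and "a \<noteq> c" "a < n" "c < n" "0 < A a b"
  shows "move_unit A a b c \<in> mats n r"
proof -
  have b: "b < n" using mats_pos_bound[OF A assms(5)] by simp
  have z: "move_unit A a b c i j = 0" if "n \<le> i \<or> n \<le> j" for i j
    using that assms b mats_zero[OF A] by (auto simp: move_unit_def)
  have ro: "ro n (move_unit A a b c) = (ro n A)(a := ro n A a - 1, c := ro n A c + 1)"
    by (rule ro_move_unit) (use assms b in auto)
  have pa: "ro n A a \<ge> 1"
  proof -
    have "A a b \<le> ro n A a" unfolding ro_def using b by (intro member_le_sum) auto
    then show ?thesis using assms by simp
  qed
  let ?f = "(ro n A)(a := ro n A a - 1)"
  have "(\<Sum>i<n. ro n (move_unit A a b c) i) + ?f c = (\<Sum>i<n. ?f i) + (ro n A c + 1)"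
    unfolding ro by (rule sum_fun_upd_add[OF assms(4)])
  moreover have "(\<Sum>i<n. ?f i) + ro n A a = (\<Sum>i<n. ro n A i) + (ro n A a - 1)"
    by (rule sum_fun_upd_add[OF assms(3)])
  ultimately have "(\<Sum>i<n. ro n (move_unit A a b c) i) = (\<Sum>i<n. ro n A i)"
    using assms pa by simp
  then show ?thesis using A z by (simp add: mats_def ro_def)
qed

lemma mminus_mplus_eq_move_unit: "mminus (mplus A i p) (Suc i) p = move_unit A (Suc i) p i"
  by (auto simp: fun_eq_iff mminus_def mplus_def move_unit_def)

lemma mplus_mminus_eq_move_unit: "mplus (mminus A i q) (Suc i) q = move_unit A i q (Suc i)"
  by (auto simp: fun_eq_iff mminus_def mplus_def move_unit_def)

lemma K_op_ebas: "A \<in> mats n r \<Longrightarrow> K_op n r la (ebas A) = (if ro n A = la then ebas A else 0)"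
  by (simp add: K_op_def lin_ext_ebas)

lemma E_op_ebas:
  "A \<in> mats n r \<Longrightarrow> E_op n r i (ebas A) = (if 0 < ro n A (Suc i) then ebas (E_move A i) else 0)"
  by (simp add: E_op_def lin_ext_ebas E_move_def last_pos_def mminus_mplus_eq_move_unit Let_def
      zero_fun_def)

lemma F_op_ebas:
  "A \<in> mats n r \<Longrightarrow> F_op n r i (ebas A) = (if 0 < ro n A i then ebas (F_move A i) else 0)"
  by (simp add: F_op_def lin_ext_ebas F_move_def first_pos_def mplus_mminus_eq_move_unit Let_def
      zero_fun_def)

lemma E_move_mats:
  "A \<in> mats n r \<Longrightarrow> Suc i < n \<Longrightarrow> 0 < ro n A (Suc i) \<Longrightarrow> E_move A i \<in> mats n r"
  unfolding E_move_def using last_pos_props by (intro move_unit_mats) (auto simp: ro_pos_iff)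

lemma F_move_mats:
  "A \<in> mats n r \<Longrightarrow> Suc i < n \<Longrightarrow> 0 < ro n A i \<Longrightarrow> F_move A i \<in> mats n r"
  unfolding F_move_def using first_pos_props by (intro move_unit_mats) (auto simp: ro_pos_iff)

lemma first_pos_lt: "A \<in> mats n r \<Longrightarrow> 0 < ro n A i \<Longrightarrow> first_pos A i < n"
  using first_pos_props(1) mats_pos_bound by (metis ro_pos_iff)

lemma ro_E_move:
  "A \<in> mats n r \<Longrightarrow> Suc i < n \<Longrightarrow> 0 < ro n A (Suc i) \<Longrightarrow> ro n (E_move A i) = E_shift (ro n A) i"
  unfolding E_move_def E_shift_def using last_pos_props
  by (subst ro_move_unit) (auto simp: ro_pos_iff fun_upd_twist)

lemma ro_F_move:
  "A \<in> mats n r \<Longrightarrow> Suc i < n \<Longrightarrow> 0 < ro n A i \<Longrightarrow> ro n (F_move A i) = F_shift (ro n A) i"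
  unfolding F_move_def F_shift_def using first_pos_props first_pos_lt
  by (subst ro_move_unit) (auto simp: ro_pos_iff)

lemma co_E_move:
  "A \<in> mats n r \<Longrightarrow> Suc i < n \<Longrightarrow> 0 < ro n A (Suc i) \<Longrightarrow> co n (E_move A i) = co n A"
  unfolding E_move_def using last_pos_props by (subst co_move_unit) (auto simp: ro_pos_iff)

lemma co_F_move:
  "A \<in> mats n r \<Longrightarrow> Suc i < n \<Longrightarrow> 0 < ro n A i \<Longrightarrow> co n (F_move A i) = co n A"
  unfolding F_move_def using first_pos_props by (subst co_move_unit) (auto simp: ro_pos_iff)

lemma move_unit_back: "0 < A a b \<Longrightarrow> a \<noteq> c \<Longrightarrow> move_unit (move_unit A a b c) c b a = A"
  by (auto simp: move_unit_def fun_eq_iff)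

lemma move_unit_comm:
  assumes "a \<noteq> c" "a' \<noteq> c'" "0 < A a b" "0 < move_unit A a b c a' b'"
    and "0 < A a' b'" "0 < move_unit A a' b' c' a b"
  shows "move_unit (move_unit A a b c) a' b' c' = move_unit (move_unit A a' b' c') a b c"
  using assms unfolding move_unit_def fun_eq_iff by auto

lemma last_pos_move_unit_other: "k \<noteq> a \<Longrightarrow> k \<noteq> c \<Longrightarrow> last_pos (move_unit A a b c) k = last_pos A k"
  by (simp add: last_pos_def move_unit_other_row)

lemma first_pos_move_unit_other: "k \<noteq> a \<Longrightarrow> k \<noteq> c \<Longrightarrow> first_pos (move_unit A a b c) k = first_pos A k"
  by (simp add: first_pos_def move_unit_other_row)

lemma last_pos_move_unit_source:
  assumes A: "A \<in> mats n r" and "a \<noteq> c" "0 < move_unit A a b c a (last_pos A a)"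
  shows "last_pos (move_unit A a b c) a = last_pos A a"
proof (rule last_pos_eq)
  show "0 < move_unit A a b c a (last_pos A a)" by fact
  fix j assume "0 < move_unit A a b c a j"
  then have "0 < A a j" using assms by (auto simp: move_unit_def split: if_splits)
  then show "j \<le> last_pos A a" using last_pos_props(3)[OF A] by blast
qed

lemma first_pos_move_unit_source:
  assumes "a \<noteq> c" "0 < move_unit A a b c a (first_pos A a)"
  shows "first_pos (move_unit A a b c) a = first_pos A a"
proof (rule first_pos_eq)
  show "0 < move_unit A a b c a (first_pos A a)" by fact
  fix j assume "0 < move_unit A a b c a j"
  then have "0 < A a j" using assms by (auto simp: move_unit_def split: if_splits)
  then show "first_pos A a \<le> j" using first_pos_props(2) by blast
qed

lemma move_unit_target_entry: "a \<noteq> c \<Longrightarrow> move_unit A a b c c j = (if j = b then Suc (A c j) else A c j)"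
  by (simp add: move_unit_def)

lemma last_pos_move_unit_target:
  assumes A: "A \<in> mats n r" and ac: "a \<noteq> c"
  shows "last_pos (move_unit A a b c) c = (if \<exists>j. 0 < A c j then max (last_pos A c) b else b)"
proof (cases "\<exists>j. 0 < A c j")
  case True
  then obtain j0 where j0: "0 < A c j0" by blast
  note gp = last_pos_props[OF A j0]
  have "last_pos (move_unit A a b c) c = max (last_pos A c) b"
  proof (rule last_pos_eq)
    show "0 < move_unit A a b c c (max (last_pos A c) b)"
      using gp(1) by (simp add: move_unit_target_entry[OF ac] max_def)
    fix j assume "0 < move_unit A a b c c j"
    then have "j = b \<or> 0 < A c j" by (auto simp: move_unit_target_entry[OF ac] split: if_splits)
    then show "j \<le> max (last_pos A c) b" using gp(3) by (metis max.coboundedI1 max.cobounded2)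
  qed
  then show ?thesis using True by simp
next
  case False
  have "last_pos (move_unit A a b c) c = b"
  proof (rule last_pos_eq)
    show "0 < move_unit A a b c c b" by (simp add: move_unit_target_entry[OF ac])
    fix j assume "0 < move_unit A a b c c j"
    then show "j \<le> b" using False by (auto simp: move_unit_target_entry[OF ac] split: if_splits)
  qed
  then show ?thesis using False by simp
qed

lemma first_pos_move_unit_target:
  assumes ac: "a \<noteq> c"
  shows "first_pos (move_unit A a b c) c = (if \<exists>j. 0 < A c j then min (first_pos A c) b else b)"
proof (cases "\<exists>j. 0 < A c j")
  case True
  then obtain j0 where j0: "0 < A c j0" by blast
  note lp = first_pos_props[of A c j0, OF j0]
  have "first_pos (move_unit A a b c) c = min (first_pos A c) b"
  proof (rule first_pos_eq)
    show "0 < move_unit A a b c c (min (first_pos A c) b)"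
      using lp(1) by (simp add: move_unit_target_entry[OF ac] min_def)
    fix j assume "0 < move_unit A a b c c j"
    then have "j = b \<or> 0 < A c j" by (auto simp: move_unit_target_entry[OF ac] split: if_splits)
    then show "min (first_pos A c) b \<le> j" using lp(2) by (metis min.coboundedI1 min.cobounded2)
  qed
  then show ?thesis using True by simp
next
  case False
  have "first_pos (move_unit A a b c) c = b"
  proof (rule first_pos_eq)
    show "0 < move_unit A a b c c b" by (simp add: move_unit_target_entry[OF ac])
    fix j assume "0 < move_unit A a b c c j"
    then show "b \<le> j" using False by (auto simp: move_unit_target_entry[OF ac] split: if_splits)
  qed
  then show ?thesis using False by simp
qed

lemma row_sum_single_entry:
  assumes A: "A \<in> mats n r" and j0: "0 < A k j0" and eq: "first_pos A k = last_pos A k"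
  shows "ro n A k = A k (last_pos A k)"
proof -
  define p where "p = last_pos A k"
  have p: "p < n" using last_pos_props(2)[OF A j0] p_def by simp
  have z: "A k l = 0" if "l \<noteq> p" for l
  proof (rule ccontr)
    assume "A k l \<noteq> 0"
    then have pos: "0 < A k l" by simp
    have "first_pos A k \<le> l" using first_pos_props(2)[of A k j0, OF j0 pos] .
    moreover have "l \<le> p" using last_pos_props(3)[OF A j0 pos] p_def by simp
    ultimately show False using eq that p_def by simp
  qed
  have "ro n A k = (\<Sum>l<n. if l = p then A k p else 0)"
    unfolding ro_def by (rule sum.cong[OF refl]) (use z in auto)
  also have "\<dots> = A k p" using p by simp
  finally show ?thesis using p_def by simp
qed

section \<open>Relations between the generators\<close>

lemma K_op_zero [simp]: "K_op n r la 0 = 0"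
  by (rule linear_op_zero[OF linear_op_K])

lemma E_op_zero [simp]: "E_op n r i 0 = 0"
  by (rule linear_op_zero[OF linear_op_E])

lemma F_op_zero [simp]: "F_op n r i 0 = 0"
  by (rule linear_op_zero[OF linear_op_F])

lemma K_comp_K: "K_op n r mu \<circ> K_op n r la = (if mu = la then K_op n r la else 0)"
  by (rule is_lin_ext_eqI) (auto intro!: is_lin_ext_intros simp: K_op_ebas)

lemma K_F_K:
  assumes "Suc i < n"
  shows "K_op n r mu \<circ> F_op n r i \<circ> K_op n r la
    = (if mu = F_shift la i then F_op n r i \<circ> K_op n r la else 0)"
  by (rule is_lin_ext_eqI)
    (use assms in \<open>auto intro!: is_lin_ext_intros simp: K_op_ebas F_op_ebas F_move_mats ro_F_move\<close>)

lemma K_E_K: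
  assumes "Suc i < n"
  shows "K_op n r mu \<circ> E_op n r i \<circ> K_op n r la
    = (if mu = E_shift la i then E_op n r i \<circ> K_op n r la else 0)"
  by (rule is_lin_ext_eqI)
    (use assms in \<open>auto intro!: is_lin_ext_intros simp: K_op_ebas E_op_ebas E_move_mats ro_E_move\<close>)

lemma E_K_eq_zero: "la (Suc i) = 0 \<Longrightarrow> E_op n r i \<circ> K_op n r la = 0"
  by (rule is_lin_ext_eqI) (auto intro!: is_lin_ext_intros simp: K_op_ebas E_op_ebas)

lemma F_K_eq_zero: "la i = 0 \<Longrightarrow> F_op n r i \<circ> K_op n r la = 0"
  by (rule is_lin_ext_eqI) (auto intro!: is_lin_ext_intros simp: K_op_ebas F_op_ebas)

lemma E_move_F_move_adjacent:
  assumes A: "A \<in> mats n r" and two: "2 \<le> ro n A (Suc i)"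
  shows "E_move (F_move A (Suc i)) i = F_move (E_move A i) (Suc i)"
proof -
  obtain j0 where j0: "0 < A (Suc i) j0"
    using two ro_pos_iff[OF A] by (metis gr0I not_numeral_le_zero)
  define p where "p = last_pos A (Suc i)"
  define q where "q = first_pos A (Suc i)"
  have pp: "0 < A (Suc i) p" using last_pos_props(1)[OF A j0] p_def by simp
  have qp: "0 < A (Suc i) q" using first_pos_props(1)[of A "Suc i" j0, OF j0] q_def by simp
  text \<open>If the row has a single nonzero entry, that entry is at least 2, so removing one unit
    from it leaves it positive.\<close>
  have single: "2 \<le> A (Suc i) p" if "p = q"
    using row_sum_single_entry[OF A j0] that two p_def q_def by simp
  have s1: "0 < move_unit A (Suc i) q (Suc (Suc i)) (Suc i) p"
    using pp single by (cases "p = q") (auto simp: move_unit_def)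
  have s2: "0 < move_unit A (Suc i) p i (Suc i) q"
    using qp single by (cases "p = q") (auto simp: move_unit_def)
  have B: "F_move A (Suc i) = move_unit A (Suc i) q (Suc (Suc i))"
    using q_def by (simp add: F_move_def)
  have C: "E_move A i = move_unit A (Suc i) p i" using p_def by (simp add: E_move_def)
  have gB: "last_pos (F_move A (Suc i)) (Suc i) = p"
    unfolding B p_def by (rule last_pos_move_unit_source[OF A]) (use s1 p_def in auto)
  have lC: "first_pos (E_move A i) (Suc i) = q"
    unfolding C q_def by (rule first_pos_move_unit_source) (use s2 q_def in auto)
  show ?thesis
    unfolding E_move_def[of "F_move A (Suc i)"] F_move_def[of "E_move A i"] gB lC
    unfolding B C by (rule move_unit_comm) (use pp qp s1 s2 in auto)
qed

lemma E_move_F_move_apart: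
  assumes A: "A \<in> mats n r" and ij: "i \<noteq> j" "j \<noteq> Suc i"
    and pos: "0 < ro n A j" "0 < ro n A (Suc i)"
  shows "E_move (F_move A j) i = F_move (E_move A i) j"
proof -
  obtain j0 where j0: "0 < A (Suc i) j0" using pos ro_pos_iff[OF A] by blast
  obtain j1 where j1: "0 < A j j1" using pos ro_pos_iff[OF A] by blast
  define p where "p = last_pos A (Suc i)"
  define q where "q = first_pos A j"
  have pp: "0 < A (Suc i) p" using last_pos_props(1)[OF A j0] p_def by simp
  have qp: "0 < A j q" using first_pos_props(1)[of A j j1, OF j1] q_def by simp
  have gB: "last_pos (F_move A j) (Suc i) = p" unfolding F_move_def p_def
    by (rule last_pos_move_unit_other) (use ij in auto)
  have lC: "first_pos (E_move A i) j = q" unfolding E_move_def q_def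
    by (rule first_pos_move_unit_other) (use ij in auto)
  show ?thesis
    unfolding E_move_def[of "F_move A j"] F_move_def[of "E_move A i"] gB lC
    unfolding F_move_def E_move_def p_def[symmetric] q_def[symmetric]
    by (rule move_unit_comm) (use pp qp ij in \<open>auto simp: move_unit_def\<close>)
qed

lemma E_F_ebas_commute:
  assumes A: "A \<in> mats n r" and i: "Suc i < n" and j: "Suc j < n" and ij: "i \<noteq> j"
  shows "E_op n r i (F_op n r j (ebas A)) = F_op n r j (E_op n r i (ebas A))"
proof (cases "j = Suc i")
  case True
  consider "ro n A j = 0" | "ro n A j = 1" | "2 \<le> ro n A j" by linarith
  then show ?thesis
  proof cases
    case 1
    then show ?thesis using A True by (simp add: F_op_ebas E_op_ebas)
  next
    case 2
    then show ?thesis using A True i j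
      by (simp add: F_op_ebas E_op_ebas F_move_mats E_move_mats ro_F_move F_shift_def
          ro_E_move E_shift_def)
  next
    case 3
    then show ?thesis using A True i j E_move_F_move_adjacent[OF A, of i]
      by (simp add: F_op_ebas E_op_ebas F_move_mats E_move_mats ro_F_move F_shift_def
          ro_E_move E_shift_def)
  qed
next
  case False
  have a1: "0 < ro n A j \<Longrightarrow> ro n (F_move A j) (Suc i) = ro n A (Suc i)"
    using A j False ij by (simp add: ro_F_move F_shift_def)
  have a2: "0 < ro n A (Suc i) \<Longrightarrow> ro n (E_move A i) j = ro n A j"
    using A i False ij by (simp add: ro_E_move E_shift_def)
  show ?thesis
    using A i j a1 a2 E_move_F_move_apart[OF A ij False]
    by (auto simp: F_op_ebas E_op_ebas F_move_mats E_move_mats)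
qed

lemma E_F_commute:
  assumes "Suc i < n" "Suc j < n" "i \<noteq> j"
  shows "E_op n r i \<circ> F_op n r j = F_op n r j \<circ> E_op n r i"
  by (rule is_lin_ext_eqI) (use assms E_F_ebas_commute in \<open>auto intro!: is_lin_ext_intros\<close>)

lemma E_move_F_move_same:
  assumes A: "A \<in> mats n r" and pos: "0 < ro n A i" "0 < ro n A (Suc i)"
  shows "E_move (F_move A i) i = F_move (E_move A i) i"
proof -
  obtain j0 where j0: "0 < A (Suc i) j0" using pos ro_pos_iff[OF A] by blast
  obtain j1 where j1: "0 < A i j1" using pos ro_pos_iff[OF A] by blast
  define p where "p = last_pos A (Suc i)"
  define q where "q = first_pos A i"
  have pp: "0 < A (Suc i) p" using last_pos_props(1)[OF A j0] p_def by simp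
  have qp: "0 < A i q" using first_pos_props(1)[of A i j1, OF j1] q_def by simp
  have B: "F_move A i = move_unit A i q (Suc i)" using q_def by (simp add: F_move_def)
  have C: "E_move A i = move_unit A (Suc i) p i" using p_def by (simp add: E_move_def)
  have gB: "last_pos (F_move A i) (Suc i) = max p q"
    unfolding B using last_pos_move_unit_target[OF A, of i "Suc i" q] j0 p_def by auto
  have lC: "first_pos (E_move A i) i = min q p"
    unfolding C using first_pos_move_unit_target[of "Suc i" i A p] j1 q_def by auto
  show ?thesis
  proof (cases "q \<le> p")
    case True
    then show ?thesis
      unfolding E_move_def[of "F_move A i"] F_move_def[of "E_move A i"] gB lC
      unfolding B C
      by (simp add: max_def min_def, intro move_unit_comm) (use pp qp in \<open>auto simp: move_unit_def\<close>)
  next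
    case False
    then show ?thesis
      unfolding E_move_def[of "F_move A i"] F_move_def[of "E_move A i"] gB lC
      unfolding B C
      using pp qp by (simp add: max_def min_def move_unit_back)
  qed
qed

lemma E_move_F_move_cancel:
  assumes A: "A \<in> mats n r" and rows: "0 < ro n A i" "ro n A (Suc i) = 0"
  shows "E_move (F_move A i) i = A"
proof -
  obtain j1 where j1: "0 < A i j1" using rows ro_pos_iff[OF A] by blast
  have empty: "\<not> (\<exists>j. 0 < A (Suc i) j)" using rows ro_pos_iff[OF A, of "Suc i"] by auto
  define q where "q = first_pos A i"
  have qp: "0 < A i q" using first_pos_props(1)[of A i j1, OF j1] q_def by simp
  have B: "F_move A i = move_unit A i q (Suc i)" using q_def by (simp add: F_move_def)
  have "last_pos (F_move A i) (Suc i) = q"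
    unfolding B using last_pos_move_unit_target[OF A, of i "Suc i" q] empty by auto
  then show ?thesis
    unfolding E_move_def[of "F_move A i"] unfolding B using qp by (simp add: move_unit_back)
qed

lemma F_move_E_move_cancel:
  assumes A: "A \<in> mats n r" and rows: "ro n A i = 0" "0 < ro n A (Suc i)"
  shows "F_move (E_move A i) i = A"
proof -
  obtain j0 where j0: "0 < A (Suc i) j0" using rows ro_pos_iff[OF A] by blast
  have empty: "\<not> (\<exists>j. 0 < A i j)" using rows ro_pos_iff[OF A, of i] by auto
  define p where "p = last_pos A (Suc i)"
  have pp: "0 < A (Suc i) p" using last_pos_props(1)[OF A j0] p_def by simp
  have C: "E_move A i = move_unit A (Suc i) p i" using p_def by (simp add: E_move_def)
  have "first_pos (E_move A i) i = p"
    unfolding C using first_pos_move_unit_target[of "Suc i" i A p] empty by auto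
  then show ?thesis
    unfolding F_move_def[of "E_move A i"] unfolding C using pp by (simp add: move_unit_back)
qed

text \<open>The scalar by which \<open>e\<^sub>i f\<^sub>i - f\<^sub>i e\<^sub>i\<close> acts on the weight space of \<open>\<lambda>\<close>.\<close>

definition EF_coeff :: "(nat \<Rightarrow> nat) \<Rightarrow> nat \<Rightarrow> complex" where
  "EF_coeff la i =
    (if 0 < la i \<and> la (Suc i) = 0 then 1 else if la i = 0 \<and> 0 < la (Suc i) then -1 else 0)"

lemma E_F_ebas_same:
  assumes A: "A \<in> mats n r" and i: "Suc i < n"
  shows "E_op n r i (F_op n r i (ebas A))
    = F_op n r i (E_op n r i (ebas A)) + fscale (EF_coeff (ro n A) i) (ebas A)"
proof -
  consider (both) "0 < ro n A i" "0 < ro n A (Suc i)" | (upper) "0 < ro n A i" "ro n A (Suc i) = 0"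
    | (lower) "ro n A i = 0" "0 < ro n A (Suc i)" | (none) "ro n A i = 0" "ro n A (Suc i) = 0"
    by linarith
  then show ?thesis
  proof cases
    case both
    then show ?thesis using A i E_move_F_move_same[OF A both]
      by (simp add: F_op_ebas E_op_ebas F_move_mats E_move_mats ro_F_move F_shift_def
          ro_E_move E_shift_def EF_coeff_def)
  next
    case upper
    then show ?thesis using A i E_move_F_move_cancel[OF A upper]
      by (simp add: F_op_ebas E_op_ebas F_move_mats ro_F_move F_shift_def EF_coeff_def)
  next
    case lower
    moreover have "ebas A + fscale (-1) (ebas A) = 0" by (simp add: fun_eq_iff)
    ultimately show ?thesis using A i F_move_E_move_cancel[OF A lower]
      by (simp add: F_op_ebas E_op_ebas E_move_mats ro_E_move E_shift_def EF_coeff_def)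
  next
    case none
    then show ?thesis using A by (simp add: F_op_ebas E_op_ebas EF_coeff_def)
  qed
qed

lemma E_F_K:
  assumes "Suc i < n"
  shows "E_op n r i \<circ> F_op n r i \<circ> K_op n r la
     = (F_op n r i \<circ> E_op n r i \<circ> K_op n r la) + (\<lambda>v. fscale (EF_coeff la i) (K_op n r la v))"
  by (rule is_lin_ext_eqI)
    (use assms E_F_ebas_same in \<open>auto intro!: is_lin_ext_intros is_lin_ext_add is_lin_ext_smult
      simp: K_op_ebas\<close>)

lemma F_E_K_eq_K:
  assumes "Suc i < n" "la i = 0" "0 < la (Suc i)"
  shows "F_op n r i \<circ> E_op n r i \<circ> K_op n r la = K_op n r la"
proof -
  have "E_op n r i \<circ> F_op n r i \<circ> K_op n r la = E_op n r i \<circ> (F_op n r i \<circ> K_op n r la)"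
    by (simp add: comp_assoc)
  also have "\<dots> = 0"
    unfolding F_K_eq_zero[of la i, OF assms(2)] by (rule ext) simp
  finally have "0 = (F_op n r i \<circ> E_op n r i \<circ> K_op n r la) + (\<lambda>v. fscale (-1) (K_op n r la v))"
    using E_F_K[OF assms(1), of r la] assms by (simp add: EF_coeff_def)
  then show ?thesis by (simp add: fun_eq_iff)
qed

section \<open>Modules over \<open>S\<^sub>0(n,r)\<close>\<close>

lemma S0_sum: "finite A \<Longrightarrow> (\<And>i. i \<in> A \<Longrightarrow> f i \<in> S0 n r) \<Longrightarrow> (\<Sum>i\<in>A. f i) \<in> S0 n r"
  by (induction A rule: finite_induct) (auto intro: S0.zero S0.add)

lemma ro_in_comps: "A \<in> mats n r \<Longrightarrow> ro n A \<in> comps n r"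
  by (auto simp: comps_def mats_def ro_def)

lemma K_op_not_comps: "la \<notin> comps n r \<Longrightarrow> K_op n r la = 0"
  by (rule is_lin_ext_eqI) (auto intro!: is_lin_ext_intros simp: K_op_ebas dest: ro_in_comps)

lemma K_op_in_S0: "K_op n r la \<in> S0 n r"
  by (cases "la \<in> comps n r") (auto intro: S0.gen_k S0.zero simp: K_op_not_comps)

lemma S0one_eq_sum_K: "S0one n r = (\<Sum>la \<in> ro n ` mats n r. K_op n r la)"
proof (rule is_lin_ext_eqI)
  show "is_lin_ext n r (S0one n r)"
    by (auto simp: is_lin_ext_def S0one_def)
  show "is_lin_ext n r (\<Sum>la \<in> ro n ` mats n r. K_op n r la)"
    by (rule is_lin_ext_sum) (auto simp: finite_mats is_lin_ext_K)
  fix A assume A: "A \<in> mats n r"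
  have "(\<Sum>la \<in> ro n ` mats n r. K_op n r la) (ebas A)
      = (\<Sum>la \<in> ro n ` mats n r. if la = ro n A then ebas A else 0)"
    using A by (auto simp: sum_fun_apply K_op_ebas intro!: sum.cong)
  also have "\<dots> = ebas A" using A finite_mats by simp
  finally show "S0one n r (ebas A) = (\<Sum>la \<in> ro n ` mats n r. K_op n r la) (ebas A)"
    using A by (simp add: S0one_def lin_ext_ebas)
qed

lemma S0one_in_S0: "S0one n r \<in> S0 n r"
  unfolding S0one_eq_sum_K using finite_mats by (intro S0_sum K_op_in_S0) auto

locale S0_module =
  fixes n r :: nat and sm :: "complex \<Rightarrow> 'm::ab_group_add \<Rightarrow> 'm" and M :: "'m set"
    and act :: "(vect \<Rightarrow> vect) \<Rightarrow> 'm \<Rightarrow> 'm"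
  assumes is_module: "is_module n r sm M act"
begin

sublocale vector_space sm
  using is_module by (simp add: is_module_def)

lemma subspace_carrier: "subspace M"
  using is_module by (simp add: is_module_def)

lemma act_closed: "a \<in> S0 n r \<Longrightarrow> x \<in> M \<Longrightarrow> act a x \<in> M"
  using is_module by (simp add: is_module_def)

lemma act_add: "a \<in> S0 n r \<Longrightarrow> x \<in> M \<Longrightarrow> y \<in> M \<Longrightarrow> act a (x + y) = act a x + act a y"
  using is_module by (simp add: is_module_def)

lemma act_scale: "a \<in> S0 n r \<Longrightarrow> x \<in> M \<Longrightarrow> act a (sm c x) = sm c (act a x)"
  using is_module by (simp add: is_module_def)

lemma act_plus: "a \<in> S0 n r \<Longrightarrow> b \<in> S0 n r \<Longrightarrow> x \<in> M \<Longrightarrow> act (a + b) x = act a x + act b x"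
  using is_module by (simp add: is_module_def)

lemma act_smult: "a \<in> S0 n r \<Longrightarrow> x \<in> M \<Longrightarrow> act (\<lambda>v. fscale c (a v)) x = sm c (act a x)"
  using is_module by (simp add: is_module_def)

lemma act_comp: "a \<in> S0 n r \<Longrightarrow> b \<in> S0 n r \<Longrightarrow> x \<in> M \<Longrightarrow> act (a \<circ> b) x = act a (act b x)"
  using is_module by (simp add: is_module_def)

lemma act_one: "x \<in> M \<Longrightarrow> act (S0one n r) x = x"
  using is_module by (simp add: is_module_def)

lemma zero_in_carrier: "0 \<in> M"
  using subspace_carrier by (rule subspace_0)

lemma act_zero_op: "x \<in> M \<Longrightarrow> act 0 x = 0"
  using act_plus[OF S0.zero S0.zero, of x] by simp

lemma act_zero_vec: "a \<in> S0 n r \<Longrightarrow> act a 0 = 0"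
  using act_add[of a 0 0] zero_in_carrier by simp

lemma act_sum:
  "finite A \<Longrightarrow> (\<And>i. i \<in> A \<Longrightarrow> f i \<in> S0 n r) \<Longrightarrow> x \<in> M \<Longrightarrow>
    act (\<Sum>i\<in>A. f i) x = (\<Sum>i\<in>A. act (f i) x)"
proof (induction A rule: finite_induct)
  case empty
  then show ?case by (simp only: sum.empty) (rule act_zero_op)
next
  case (insert i A)
  have "act (f i + sum f A) x = act (f i) x + act (sum f A) x"
    using insert by (intro act_plus S0_sum) auto
  also have "\<dots> = act (f i) x + (\<Sum>i\<in>A. act (f i) x)"
    using insert by simp
  finally show ?case using insert by (simp only: sum.insert[OF insert(1,2)])
qed

lemma act_diff_eq_zero_iff:
  assumes "a \<in> S0 n r" "b \<in> S0 n r" "x \<in> M"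
  shows "act (a + (\<lambda>v. fscale (-1) (b v))) x = 0 \<longleftrightarrow> act a x = act b x"
  using assms by (simp add: act_plus act_smult S0.smult eq_neg_iff_add_eq_0[symmetric])

lemma exists_weight:
  assumes "x \<in> M" "x \<noteq> 0"
  shows "\<exists>la. act (K_op n r la) x \<noteq> 0"
proof (rule ccontr)
  assume "\<nexists>la. act (K_op n r la) x \<noteq> 0"
  then have "act (S0one n r) x = 0"
    unfolding S0one_eq_sum_K using assms(1) by (simp add: act_sum finite_mats K_op_in_S0)
  then show False using assms act_one by simp
qed

end

lemma S0_module_prod:
  fixes sm :: "complex \<Rightarrow> 'm::ab_group_add \<Rightarrow> 'm" and sm' :: "complex \<Rightarrow> 'k::ab_group_add \<Rightarrow> 'k"
  assumes "S0_module n r sm M act" and "S0_module n r sm' M' act'"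
  shows "S0_module n r (\<lambda>c p. (sm c (fst p), sm' c (snd p))) (M \<times> M')
    (\<lambda>a p. (act a (fst p), act' a (snd p)))"
proof -
  interpret m1: S0_module n r sm M act by fact
  interpret m2: S0_module n r sm' M' act' by fact
  let ?sm = "\<lambda>c p. (sm c (fst p), sm' c (snd p))"
  have vs: "vector_space ?sm"
    unfolding vector_space_def
    by (simp add: prod_eq_iff m1.scale_right_distrib m2.scale_right_distrib
        m1.scale_left_distrib m2.scale_left_distrib)
  then interpret vector_space ?sm .
  have "subspace (M \<times> M')"
    unfolding subspace_def
    using m1.subspace_carrier m2.subspace_carrier
    by (auto simp: zero_prod_def m1.subspace_0 m2.subspace_0 m1.subspace_add m2.subspace_add
        m1.subspace_scale m2.subspace_scale)
  with vs show ?thesis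
    unfolding S0_module_def is_module_def
    by (auto simp: mem_Times_iff m1.act_closed m2.act_closed m1.act_add m2.act_add
        m1.act_scale m2.act_scale m1.act_plus m2.act_plus m1.act_smult m2.act_smult
        m1.act_comp m2.act_comp m1.act_one m2.act_one
        simp del: plus_fun_apply fscale_apply comp_apply)
qed

locale simple_S0_module = S0_module +
  assumes simple: "M \<noteq> {0}" "\<And>N. is_submodule n r sm M act N \<Longrightarrow> N = {0} \<or> N = M"
begin

lemma cyclic:
  assumes w: "w \<in> M" "w \<noteq> 0" and u: "u \<in> M"
  shows "\<exists>b\<in>S0 n r. act b w = u"
proof -
  define N where "N = (\<lambda>b. act b w) ` S0 n r"
  have "is_submodule n r sm M act N"
    unfolding is_submodule_def
  proof (intro conjI ballI)
    show "N \<subseteq> M" using act_closed[OF _ w(1)] N_def by auto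
    show "subspace N"
      unfolding subspace_def N_def
    proof (intro conjI ballI allI)
      show "0 \<in> (\<lambda>b. act b w) ` S0 n r"
        using act_zero_op[OF w(1)] by (intro rev_image_eqI[OF S0.zero]) simp
      fix x y assume "x \<in> (\<lambda>b. act b w) ` S0 n r" "y \<in> (\<lambda>b. act b w) ` S0 n r"
      then obtain b b' where "b \<in> S0 n r" "b' \<in> S0 n r" "x = act b w" "y = act b' w"
        by blast
      then show "x + y \<in> (\<lambda>b. act b w) ` S0 n r"
        using act_plus[OF _ _ w(1)] by (intro rev_image_eqI[of "b + b'"] S0.add) simp_all
    next
      fix c x assume "x \<in> (\<lambda>b. act b w) ` S0 n r"
      then obtain b where "b \<in> S0 n r" "x = act b w" by blast
      then show "sm c x \<in> (\<lambda>b. act b w) ` S0 n r"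
        using act_smult[OF _ w(1), of b c]
        by (intro rev_image_eqI[OF S0.smult[of b n r c]]) simp_all
    qed
    fix a x assume a: "a \<in> S0 n r" and "x \<in> N"
    then obtain b where b: "b \<in> S0 n r" "x = act b w" using N_def by blast
    then have "act a x = act (a \<circ> b) w" using act_comp[OF a b(1) w(1)] by simp
    then show "act a x \<in> N" unfolding N_def using S0.mult[OF a b(1)] by blast
  qed
  moreover have "w \<in> N"
    unfolding N_def using act_one[OF w(1)] by (intro rev_image_eqI[OF S0one_in_S0]) simp
  ultimately have "N = M" using simple(2)[of N] w(2) by blast
  then show ?thesis using u N_def by auto
qed

end

lemma simple_S0_moduleI: "is_simple_module n r sm M act \<Longrightarrow> simple_S0_module n r sm M act"
  by (simp add: is_simple_module_def simple_S0_module_def simple_S0_module_axioms_def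
      S0_module_def)

section \<open>Highest weight vectors\<close>

definition weight_degree :: "nat \<Rightarrow> (nat \<Rightarrow> nat) \<Rightarrow> nat" where
  "weight_degree n la = (\<Sum>i<n. i * la i)"

lemma weight_degree_F_shift:
  assumes "Suc j < n" "0 < la j"
  shows "weight_degree n (F_shift la j) = weight_degree n la + 1"
proof -
  let ?g = "\<lambda>i. i * la i"
  let ?g1 = "?g(j := j * (la j - 1))"
  have eq: "(\<lambda>i. i * F_shift la j i) = ?g1(Suc j := Suc j * (la (Suc j) + 1))"
    by (auto simp: F_shift_def fun_eq_iff)
  have "(\<Sum>i<n. ?g1 i) + j * la j = (\<Sum>i<n. ?g i) + j * (la j - 1)"
    using sum_fun_upd_add[of j n ?g] assms by simp
  moreover have "(\<Sum>i<n. (?g1(Suc j := Suc j * (la (Suc j) + 1))) i) + ?g1 (Suc j)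
      = (\<Sum>i<n. ?g1 i) + Suc j * (la (Suc j) + 1)"
    by (rule sum_fun_upd_add) (use assms in auto)
  ultimately show ?thesis
    using assms(2) unfolding weight_degree_def eq by (cases "la j") (auto simp: algebra_simps)
qed

lemma weight_degree_E_shift:
  assumes "Suc i < n" "0 < la (Suc i)"
  shows "weight_degree n (E_shift la i) < weight_degree n la"
proof -
  have "F_shift (E_shift la i) i = la"
    using assms by (auto simp: F_shift_def E_shift_def fun_eq_iff)
  moreover have "weight_degree n (F_shift (E_shift la i) i) = weight_degree n (E_shift la i) + 1"
    by (rule weight_degree_F_shift[OF assms(1)]) (simp add: E_shift_def)
  ultimately show ?thesis by simp
qed

definition valid_word :: "nat \<Rightarrow> nat list \<Rightarrow> bool" where
  "valid_word n u \<longleftrightarrow> (\<forall>j\<in>set u. Suc j < n)"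

definition F_word_weight :: "(nat \<Rightarrow> nat) \<Rightarrow> nat list \<Rightarrow> nat \<Rightarrow> nat" where
  "F_word_weight la u = foldr (\<lambda>j nu. F_shift nu j) u la"

context S0_module
begin

lemma act_comp3:
  "a \<in> S0 n r \<Longrightarrow> b \<in> S0 n r \<Longrightarrow> c \<in> S0 n r \<Longrightarrow> z \<in> M \<Longrightarrow>
    act (a \<circ> b \<circ> c) z = act a (act b (act c z))"
  by (simp add: act_comp act_closed S0.mult)

definition is_weight_vector :: "(nat \<Rightarrow> nat) \<Rightarrow> 'm \<Rightarrow> bool" where
  "is_weight_vector nu z \<longleftrightarrow> z \<in> M \<and> act (K_op n r nu) z = z"

definition is_hw_vector :: "(nat \<Rightarrow> nat) \<Rightarrow> 'm \<Rightarrow> bool" where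
  "is_hw_vector la y \<longleftrightarrow> is_weight_vector la y \<and> (\<forall>i. Suc i < n \<longrightarrow> act (E_op n r i) y = 0)"

lemma weight_vector_K:
  assumes "z \<in> M"
  shows "is_weight_vector nu (act (K_op n r nu) z)"
  using act_comp[OF K_op_in_S0 K_op_in_S0 assms, of nu nu] assms
  by (simp add: is_weight_vector_def act_closed K_op_in_S0 K_comp_K)

lemma act_K_weight_vector:
  assumes "is_weight_vector nu z"
  shows "act (K_op n r mu) z = (if mu = nu then z else 0)"
proof -
  have "act (K_op n r mu) z = act (K_op n r mu \<circ> K_op n r nu) z"
    using assms act_comp[OF K_op_in_S0 K_op_in_S0] by (simp add: is_weight_vector_def)
  then show ?thesis using assms by (simp add: K_comp_K act_zero_op is_weight_vector_def)
qed

lemma weight_vector_E: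
  assumes z: "is_weight_vector nu z" and i: "Suc i < n"
  shows "is_weight_vector (E_shift nu i) (act (E_op n r i) z)"
proof -
  have zM: "z \<in> M" and Kz: "act (K_op n r nu) z = z" using z by (auto simp: is_weight_vector_def)
  have "act (K_op n r (E_shift nu i)) (act (E_op n r i) z)
      = act (K_op n r (E_shift nu i) \<circ> E_op n r i \<circ> K_op n r nu) z"
    using act_comp3[OF K_op_in_S0 S0.gen_e[OF i] K_op_in_S0 zM] Kz by simp
  also have "\<dots> = act (E_op n r i) z"
    unfolding K_E_K[OF i] using act_comp[OF S0.gen_e[OF i] K_op_in_S0 zM] Kz by simp
  finally show ?thesis using act_closed[OF S0.gen_e[OF i] zM] by (simp add: is_weight_vector_def)
qed

lemma act_E_weight_vector_zero:
  assumes z: "is_weight_vector nu z" and i: "Suc i < n" and nu: "nu (Suc i) = 0"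
  shows "act (E_op n r i) z = 0"
proof -
  have zM: "z \<in> M" and Kz: "act (K_op n r nu) z = z" using z by (auto simp: is_weight_vector_def)
  have "act (E_op n r i) z = act (E_op n r i \<circ> K_op n r nu) z"
    using act_comp[OF S0.gen_e[OF i] K_op_in_S0 zM] Kz by simp
  then show ?thesis using E_K_eq_zero[of nu i n r, OF nu] act_zero_op[OF zM] by simp
qed

lemma weight_vector_F:
  assumes z: "is_weight_vector nu z" and j: "Suc j < n"
  shows "is_weight_vector (F_shift nu j) (act (F_op n r j) z)"
proof -
  have zM: "z \<in> M" and Kz: "act (K_op n r nu) z = z" using z by (auto simp: is_weight_vector_def)
  have "act (K_op n r (F_shift nu j)) (act (F_op n r j) z)
      = act (K_op n r (F_shift nu j) \<circ> F_op n r j \<circ> K_op n r nu) z"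
    using act_comp3[OF K_op_in_S0 S0.gen_f[OF j] K_op_in_S0 zM] Kz by simp
  also have "\<dots> = act (F_op n r j) z"
    unfolding K_F_K[OF j] using act_comp[OF S0.gen_f[OF j] K_op_in_S0 zM] Kz by simp
  finally show ?thesis using act_closed[OF S0.gen_f[OF j] zM] by (simp add: is_weight_vector_def)
qed

lemma act_F_weight_vector_zero:
  assumes z: "is_weight_vector nu z" and j: "Suc j < n" and nu: "nu j = 0"
  shows "act (F_op n r j) z = 0"
proof -
  have zM: "z \<in> M" and Kz: "act (K_op n r nu) z = z" using z by (auto simp: is_weight_vector_def)
  have "act (F_op n r j) z = act (F_op n r j \<circ> K_op n r nu) z"
    using act_comp[OF S0.gen_f[OF j] K_op_in_S0 zM] Kz by simp
  then show ?thesis using F_K_eq_zero[of nu j n r, OF nu] act_zero_op[OF zM] by simp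
qed

lemma act_E_F_commute:
  assumes "Suc i < n" "Suc j < n" "i \<noteq> j" "z \<in> M"
  shows "act (E_op n r i) (act (F_op n r j) z) = act (F_op n r j) (act (E_op n r i) z)"
proof -
  have "act (E_op n r i) (act (F_op n r j) z) = act (E_op n r i \<circ> F_op n r j) z"
    using assms by (simp add: act_comp S0.gen_e S0.gen_f)
  also have "\<dots> = act (F_op n r j) (act (E_op n r i) z)"
    using assms by (simp add: E_F_commute act_comp S0.gen_e S0.gen_f)
  finally show ?thesis .
qed

lemma act_E_F_weight_vector:
  assumes z: "is_weight_vector nu z" and i: "Suc i < n"
  shows "act (E_op n r i) (act (F_op n r i) z)
    = act (F_op n r i) (act (E_op n r i) z) + sm (EF_coeff nu i) z"
proof -
  have zM: "z \<in> M" and Kz: "act (K_op n r nu) z = z" using z by (auto simp: is_weight_vector_def)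
  note E = S0.gen_e[OF i] and F = S0.gen_f[OF i] and K = K_op_in_S0[of n r nu]
  have "act (E_op n r i) (act (F_op n r i) z) = act (E_op n r i \<circ> F_op n r i \<circ> K_op n r nu) z"
    using act_comp3[OF E F K zM] Kz by simp
  also have "\<dots> = act (F_op n r i \<circ> E_op n r i \<circ> K_op n r nu) z
      + act (\<lambda>v. fscale (EF_coeff nu i) (K_op n r nu v)) z"
    unfolding E_F_K[OF i] using E F K zM by (intro act_plus S0.mult S0.smult)
  also have "\<dots> = act (F_op n r i) (act (E_op n r i) z) + sm (EF_coeff nu i) z"
    using act_comp3[OF F E K zM] act_smult[OF K zM] Kz by simp
  finally show ?thesis .
qed

lemma act_F_E_weight_vector:
  assumes z: "is_weight_vector nu z" and i: "Suc i < n" and nu: "nu i = 0" "0 < nu (Suc i)"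
  shows "act (F_op n r i) (act (E_op n r i) z) = z"
proof -
  have zM: "z \<in> M" and Kz: "act (K_op n r nu) z = z" using z by (auto simp: is_weight_vector_def)
  have "act (F_op n r i) (act (E_op n r i) z) = act (F_op n r i \<circ> E_op n r i \<circ> K_op n r nu) z"
    using act_comp3[OF S0.gen_f[OF i] S0.gen_e[OF i] K_op_in_S0 zM] Kz by simp
  then show ?thesis using F_E_K_eq_K[OF i nu] Kz by simp
qed


definition F_word :: "nat list \<Rightarrow> 'm \<Rightarrow> 'm" where
  "F_word u z = foldr (\<lambda>j. act (F_op n r j)) u z"

definition F_span :: "'m \<Rightarrow> 'm set" where
  "F_span y = span {F_word u y | u. valid_word n u}"

lemma F_word_in_carrier: "y \<in> M \<Longrightarrow> valid_word n u \<Longrightarrow> F_word u y \<in> M"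
  by (induction u) (auto simp: F_word_def valid_word_def intro!: act_closed S0.gen_f)

lemma F_word_weight_vector:
  assumes y: "is_weight_vector la y"
  shows "valid_word n u \<Longrightarrow> is_weight_vector (F_word_weight la u) (F_word u y)"
proof (induction u)
  case Nil
  then show ?case using y by (simp add: F_word_def F_word_weight_def)
next
  case (Cons j u)
  then have j: "Suc j < n" and IH: "is_weight_vector (F_word_weight la u) (F_word u y)"
    by (auto simp: valid_word_def)
  then show ?case using weight_vector_F[OF IH j] by (simp add: F_word_def F_word_weight_def)
qed

lemma F_word_degree:
  assumes y: "is_weight_vector la y"
  shows "valid_word n u \<Longrightarrow>
    F_word u y = 0 \<or> weight_degree n (F_word_weight la u) = weight_degree n la + length u"
proof (induction u)
  case Nil
  then show ?case by (simp add: F_word_weight_def)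
next
  case (Cons j u)
  then have j: "Suc j < n" and u: "valid_word n u" by (auto simp: valid_word_def)
  let ?z = "F_word u y" and ?nu = "F_word_weight la u"
  have z: "is_weight_vector ?nu ?z" by (rule F_word_weight_vector[OF y u])
  have F_word_Cons: "F_word (j # u) y = act (F_op n r j) ?z" by (simp add: F_word_def)
  consider "?z = 0" | "?nu j = 0" | "?z \<noteq> 0" "0 < ?nu j" by blast
  then show ?case
  proof cases
    case 1
    then show ?thesis using F_word_Cons act_zero_vec[OF S0.gen_f[OF j]] by simp
  next
    case 2
    then show ?thesis using F_word_Cons act_F_weight_vector_zero[OF z j] by simp
  next
    case 3
    then show ?thesis using Cons.IH[OF u] weight_degree_F_shift[OF j]
      by (simp add: F_word_weight_def)
  qed
qed

lemma K_F_word_nonempty: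
  assumes "is_weight_vector la y" "valid_word n u" "u \<noteq> []"
  shows "act (K_op n r la) (F_word u y) = 0"
  using act_K_weight_vector[OF F_word_weight_vector[OF assms(1,2)], of la]
    F_word_degree[OF assms(1,2)] assms(3)
  by auto

lemma F_span_subset: "y \<in> M \<Longrightarrow> F_span y \<subseteq> M"
  unfolding F_span_def using F_word_in_carrier subspace_carrier by (intro span_minimal) auto

lemma F_word_in_F_span: "valid_word n u \<Longrightarrow> F_word u y \<in> F_span y"
  unfolding F_span_def by (intro span_base) auto

lemma act_F_span:
  assumes y: "y \<in> M" and b: "b \<in> S0 n r" and P: "subspace P"
    and words: "\<And>u. valid_word n u \<Longrightarrow> act b (F_word u y) \<in> P"
    and z: "z \<in> F_span y"
  shows "act b z \<in> P"
proof -
  have "z \<in> M \<and> act b z \<in> P"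
    using z[unfolded F_span_def]
  proof (rule span_induct)
    show "subspace {z. z \<in> M \<and> act b z \<in> P}"
      unfolding subspace_def
      using P[unfolded subspace_def] zero_in_carrier subspace_add[OF subspace_carrier]
        subspace_scale[OF subspace_carrier] act_zero_vec[OF b] act_add[OF b] act_scale[OF b]
      by auto
    show "w \<in> M \<and> act b w \<in> P" if "w \<in> {F_word u y | u. valid_word n u}" for w
      using that words F_word_in_carrier[OF y] by auto
  qed
  then show ?thesis by simp
qed

lemma F_span_act_F:
  assumes y: "y \<in> M" and j: "Suc j < n" and z: "z \<in> F_span y"
  shows "act (F_op n r j) z \<in> F_span y"
proof (rule act_F_span[OF y S0.gen_f[OF j] _ _ z])
  show "subspace (F_span y)" by (simp add: F_span_def)
  fix u assume "valid_word n u"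
  then have "valid_word n (j # u)" using j by (simp add: valid_word_def)
  then show "act (F_op n r j) (F_word u y) \<in> F_span y"
    using F_word_in_F_span[of "j # u" y] by (simp add: F_word_def)
qed

text \<open>Commuting \<open>e\<^sub>i\<close> past the letters of an \<open>f\<close>-word produces only shorter words, since
  \<open>e\<^sub>i\<close> kills \<open>y\<close>.\<close>

lemma E_F_word_in_F_span:
  assumes y: "is_hw_vector la y" and i: "Suc i < n"
  shows "valid_word n u \<Longrightarrow> act (E_op n r i) (F_word u y) \<in> F_span y"
proof (induction u)
  case Nil
  then show ?case using y i by (simp add: is_hw_vector_def F_word_def F_span_def span_zero)
next
  case (Cons j u)
  then have j: "Suc j < n" and u: "valid_word n u"
    and IH: "act (E_op n r i) (F_word u y) \<in> F_span y"
    by (auto simp: valid_word_def)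
  have yM: "y \<in> M" using y by (simp add: is_hw_vector_def is_weight_vector_def)
  let ?z = "F_word u y" and ?nu = "F_word_weight la u"
  have z: "is_weight_vector ?nu ?z"
    using F_word_weight_vector[OF _ u] y by (simp add: is_hw_vector_def)
  then have zM: "?z \<in> M" by (simp add: is_weight_vector_def)
  have F_word_Cons: "F_word (j # u) y = act (F_op n r j) ?z" by (simp add: F_word_def)
  show ?case
  proof (cases "i = j")
    case False
    then show ?thesis
      unfolding F_word_Cons act_E_F_commute[OF i j False zM] using F_span_act_F[OF yM j IH] by simp
  next
    case True
    have "act (E_op n r i) (F_word (j # u) y)
        = act (F_op n r i) (act (E_op n r i) ?z) + sm (EF_coeff ?nu i) ?z"
      using act_E_F_weight_vector[OF z i] by (simp add: F_word_def True)
    also have "\<dots> \<in> F_span y"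
      using F_span_act_F[OF yM i IH] F_word_in_F_span[OF u]
      by (simp add: F_span_def span_add span_scale)
    finally show ?thesis .
  qed
qed

lemma F_span_invariant:
  assumes y: "is_hw_vector la y" and a: "a \<in> S0 n r" and z: "z \<in> F_span y"
  shows "act a z \<in> F_span y"
proof -
  have yM: "y \<in> M" using y by (simp add: is_hw_vector_def is_weight_vector_def)
  have sub: "subspace (F_span y)" by (simp add: F_span_def)
  show ?thesis
    using a z
  proof (induction arbitrary: z rule: S0.induct)
    case zero
    then have "act 0 z = 0" using act_zero_op F_span_subset[OF yM] by blast
    then show ?case using subspace_0[OF sub] by (simp add: zero_fun_def)
  next
    case (gen_k nu)
    show ?case
    proof (rule act_F_span[OF yM K_op_in_S0 sub _ gen_k.prems])
      fix u assume u: "valid_word n u"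
      show "act (K_op n r nu) (F_word u y) \<in> F_span y"
        using act_K_weight_vector[OF F_word_weight_vector[OF _ u], of la y nu] y
          F_word_in_F_span[OF u] subspace_0[OF sub]
        by (auto simp: is_hw_vector_def)
    qed
  next
    case (gen_e i)
    then show ?case
      using act_F_span[OF yM S0.gen_e[OF gen_e(1)] sub] E_F_word_in_F_span[OF y] by blast
  next
    case (gen_f i)
    then show ?case using F_span_act_F[OF yM] by blast
  next
    case (add a b)
    then show ?case
      using act_plus F_span_subset[OF yM] subspace_add[OF sub] by (auto simp del: plus_fun_apply)
  next
    case (smult a c)
    then show ?case
      using act_smult F_span_subset[OF yM] subspace_scale[OF sub] by (auto simp del: fscale_apply)
  next
    case (mult a b)
    then show ?case using act_comp F_span_subset[OF yM] by (auto simp del: comp_apply)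
  qed
qed

text \<open>This is what makes a simple module determined by its highest weight.\<close>

lemma hw_vector_scalar:
  assumes y: "is_hw_vector la y" and a: "a \<in> S0 n r"
  shows "\<exists>c. act (K_op n r la \<circ> a) y = sm c y"
proof -
  have yM: "y \<in> M" and Ky: "act (K_op n r la) y = y"
    using y by (auto simp: is_hw_vector_def is_weight_vector_def)
  have "y \<in> F_span y" using F_word_in_F_span[of "[]" y] by (simp add: F_word_def valid_word_def)
  then have "act a y \<in> F_span y" by (rule F_span_invariant[OF y a])
  moreover have "act (K_op n r la) z \<in> span {y}" if "z \<in> F_span y" for z
  proof (rule act_F_span[OF yM K_op_in_S0 _ _ that])
    fix u assume u: "valid_word n u"
    show "act (K_op n r la) (F_word u y) \<in> span {y}"
    proof (cases "u = []")
      case True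
      then show ?thesis using Ky by (simp add: F_word_def span_base)
    next
      case False
      then show ?thesis
        using K_F_word_nonempty[OF _ u] y by (simp add: is_hw_vector_def span_zero)
    qed
  qed simp
  ultimately have "act (K_op n r la \<circ> a) y \<in> span {y}"
    using act_comp[OF K_op_in_S0 a yM] by simp
  then show ?thesis by (auto simp: span_singleton)
qed

lemma hw_vector_exists:
  assumes "x0 \<in> M" "x0 \<noteq> 0"
  shows "\<exists>la x. is_hw_vector la x \<and> x \<noteq> 0"
proof -
  define is_weight where "is_weight nu \<longleftrightarrow> (\<exists>z\<in>M. act (K_op n r nu) z \<noteq> 0)" for nu
  obtain nu0 where "is_weight nu0" using exists_weight[OF assms] assms(1) is_weight_def by blast
  then obtain la where la: "is_weight la"
    and la_min: "\<And>nu. is_weight nu \<Longrightarrow> weight_degree n la \<le> weight_degree n nu"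
    using ex_has_least_nat[of is_weight nu0 "weight_degree n"] by blast
  obtain z where z: "z \<in> M" "act (K_op n r la) z \<noteq> 0" using la is_weight_def by blast
  define x where "x = act (K_op n r la) z"
  have x: "is_weight_vector la x" unfolding x_def by (rule weight_vector_K[OF z(1)])
  have "act (E_op n r i) x = 0" if i: "Suc i < n" for i
  proof (cases "la (Suc i) = 0")
    case True
    then show ?thesis by (rule act_E_weight_vector_zero[OF x i])
  next
    case False
    text \<open>Otherwise \<open>e\<^sub>i x\<close> would be a nonzero vector of a weight of smaller degree.\<close>
    have "act (E_op n r i) x \<in> M"
      and "act (K_op n r (E_shift la i)) (act (E_op n r i) x) = act (E_op n r i) x"
      using weight_vector_E[OF x i] by (simp_all add: is_weight_vector_def)
    moreover have "\<not> is_weight (E_shift la i)"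
      using la_min weight_degree_E_shift[OF i] False by (meson leD not_gr0)
    ultimately show ?thesis using is_weight_def by auto
  qed
  then have "is_hw_vector la x" using x by (simp add: is_hw_vector_def)
  then show ?thesis using z(2) x_def by blast
qed

lemma weight_vector_weight_in_comps:
  assumes "is_weight_vector la x" "x \<noteq> 0"
  shows "la \<in> comps n r"
proof (rule ccontr)
  assume "la \<notin> comps n r"
  moreover have "x \<in> M" using assms(1) by (simp add: is_weight_vector_def)
  ultimately have "act (K_op n r la) x = 0" using K_op_not_comps act_zero_op by simp
  then show False using assms by (simp add: is_weight_vector_def)
qed

lemma hw_vector_weight_in_comps_bullet:
  assumes x: "is_hw_vector la x" "x \<noteq> 0"
  shows "la \<in> comps_bullet n r"
proof -
  have xw: "is_weight_vector la x" using x by (simp add: is_hw_vector_def)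
  have la: "la \<in> comps n r" by (rule weight_vector_weight_in_comps[OF xw x(2)])
  have step: "la (Suc i) = 0" if "la i = 0" for i
  proof (cases "Suc i < n")
    case False
    then show ?thesis using la by (simp add: comps_def)
  next
    case i: True
    show ?thesis
    proof (rule ccontr)
      assume "la (Suc i) \<noteq> 0"
      then have "x = act (F_op n r i) (act (E_op n r i) x)"
        using act_F_E_weight_vector[OF xw i that] by simp
      also have "\<dots> = 0" using x i act_zero_vec[OF S0.gen_f[OF i]] by (simp add: is_hw_vector_def)
      finally show False using x(2) by simp
    qed
  qed
  have "la j = 0" if "i < j" "la i = 0" for i j
    using that by (induction j) (auto simp: less_Suc_eq step)
  then show ?thesis using la by (auto simp: comps_bullet_def)
qed

end

context simple_S0_module
begin

lemma hw_vector_annihilator: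
  assumes x: "is_hw_vector la x" "x \<noteq> 0" and a: "a \<in> S0 n r"
  shows "act a x = 0 \<longleftrightarrow> (\<forall>b\<in>S0 n r. act (K_op n r la \<circ> (b \<circ> a)) x = 0)"
proof -
  have xM: "x \<in> M" and Kx: "act (K_op n r la) x = x"
    using x by (auto simp: is_hw_vector_def is_weight_vector_def)
  have comp: "act (K_op n r la \<circ> (b \<circ> a)) x = act (K_op n r la) (act b (act a x))"
    if "b \<in> S0 n r" for b
    using that a xM by (simp add: act_comp act_closed S0.mult K_op_in_S0)
  show ?thesis
  proof
    assume "act a x = 0"
    then show "\<forall>b\<in>S0 n r. act (K_op n r la \<circ> (b \<circ> a)) x = 0"
      using comp by (simp add: act_zero_vec K_op_in_S0)
  next
    assume all: "\<forall>b\<in>S0 n r. act (K_op n r la \<circ> (b \<circ> a)) x = 0"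
    show "act a x = 0"
    proof (rule ccontr)
      assume "act a x \<noteq> 0"
      then obtain b where b: "b \<in> S0 n r" "act b (act a x) = x"
        using cyclic[OF act_closed[OF a xM] _ xM] by blast
      then show False using all comp Kx x(2) by auto
    qed
  qed
qed

end

lemma module_iso_of_same_annihilator:
  fixes sm :: "complex \<Rightarrow> 'm::ab_group_add \<Rightarrow> 'm" and sm' :: "complex \<Rightarrow> 'k::ab_group_add \<Rightarrow> 'k"
  assumes "simple_S0_module n r sm M act" and "simple_S0_module n r sm' M' act'"
    and x: "x \<in> M" "x \<noteq> 0" and x': "x' \<in> M'" "x' \<noteq> 0"
    and ann: "\<And>a. a \<in> S0 n r \<Longrightarrow> act a x = 0 \<longleftrightarrow> act' a x' = 0"
  shows "module_iso n r sm M act sm' M' act'"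
proof -
  interpret m1: simple_S0_module n r sm M act by fact
  interpret m2: simple_S0_module n r sm' M' act' by fact
  have same: "act a x = act b x \<longleftrightarrow> act' a x' = act' b x'" if "a \<in> S0 n r" "b \<in> S0 n r" for a b
    using ann[OF S0.add[OF that(1) S0.smult[OF that(2)]]]
      m1.act_diff_eq_zero_iff[OF that x(1)] m2.act_diff_eq_zero_iff[OF that x'(1)] by simp
  text \<open>\<open>f (a x) = a x'\<close>, well defined because \<open>x\<close> and \<open>x'\<close> have the same annihilator.\<close>
  define g where "g u = (SOME a. a \<in> S0 n r \<and> act a x = u)" for u
  define f where "f u = act' (g u) x'" for u
  have g: "g u \<in> S0 n r \<and> act (g u) x = u" if "u \<in> M" for u
    using m1.cyclic[OF x that] unfolding g_def by (metis (mono_tags, lifting) someI_ex)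
  have f_act: "f (act a x) = act' a x'" if "a \<in> S0 n r" for a
    using same[OF _ that] g[OF m1.act_closed[OF that x(1)]] unfolding f_def by blast
  have "bij_betw f M M'"
  proof (rule bij_betwI')
    fix u v assume "u \<in> M" "v \<in> M"
    then show "(f u = f v) = (u = v)" using g same unfolding f_def by metis
  next
    fix u assume "u \<in> M"
    then show "f u \<in> M'" using g m2.act_closed[OF _ x'(1)] unfolding f_def by blast
  next
    fix v assume v: "v \<in> M'"
    obtain a where a: "a \<in> S0 n r" "act' a x' = v" using m2.cyclic[OF x' v] by blast
    show "\<exists>u\<in>M. v = f u" using f_act[OF a(1)] a m1.act_closed[OF a(1) x(1)] by metis
  qed
  moreover have "f (u + v) = f u + f v" if "u \<in> M" "v \<in> M" for u v
  proof -
    have "u + v = act (g u + g v) x"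
      using g[OF that(1)] g[OF that(2)] m1.act_plus[OF _ _ x(1)] by simp
    then have "f (u + v) = act' (g u + g v) x'" using f_act S0.add g that by metis
    also have "\<dots> = f u + f v" using m2.act_plus[OF _ _ x'(1)] g that unfolding f_def by simp
    finally show ?thesis .
  qed
  moreover have "f (sm c u) = sm' c (f u)" if "u \<in> M" for c u
  proof -
    have "sm c u = act (\<lambda>v. fscale c (g u v)) x" using g[OF that] m1.act_smult[OF _ x(1)] by simp
    then have "f (sm c u) = act' (\<lambda>v. fscale c (g u v)) x'" using f_act S0.smult g that by metis
    also have "\<dots> = sm' c (f u)" using m2.act_smult[OF _ x'(1)] g that unfolding f_def by simp
    finally show ?thesis .
  qed
  moreover have "f (act b u) = act' b (f u)" if "b \<in> S0 n r" "u \<in> M" for b u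
  proof -
    have "act b u = act (b \<circ> g u) x" using g[OF that(2)] m1.act_comp[OF that(1) _ x(1)] by simp
    then have "f (act b u) = act' (b \<circ> g u) x'" using f_act S0.mult[OF that(1)] g that(2) by metis
    also have "\<dots> = act' b (f u)"
      using m2.act_comp[OF that(1) _ x'(1)] g that(2) unfolding f_def by simp
    finally show ?thesis .
  qed
  ultimately show ?thesis unfolding module_iso_def by blast
qed

lemma module_iso_of_hw_vectors:
  fixes sm :: "complex \<Rightarrow> 'm::ab_group_add \<Rightarrow> 'm" and sm' :: "complex \<Rightarrow> 'k::ab_group_add \<Rightarrow> 'k"
  assumes "simple_S0_module n r sm M act" and "simple_S0_module n r sm' M' act'"
    and x: "S0_module.is_hw_vector n r M act la x" "x \<noteq> 0"
    and x': "S0_module.is_hw_vector n r M' act' la x'" "x' \<noteq> 0"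
  shows "module_iso n r sm M act sm' M' act'"
proof -
  interpret m1: simple_S0_module n r sm M act by fact
  interpret m2: simple_S0_module n r sm' M' act' by fact
  let ?sm = "\<lambda>c p. (sm c (fst p), sm' c (snd p))" and ?act = "\<lambda>a p. (act a (fst p), act' a (snd p))"
  interpret p: S0_module n r ?sm "M \<times> M'" ?act
    by (rule S0_module_prod) unfold_locales
  have xM: "x \<in> M" and x'M: "x' \<in> M'"
    using x x' by (auto simp: m1.is_hw_vector_def m1.is_weight_vector_def
        m2.is_hw_vector_def m2.is_weight_vector_def)
  have hw: "p.is_hw_vector la (x, x')"
    using x x' by (simp add: p.is_hw_vector_def p.is_weight_vector_def m1.is_hw_vector_def
        m1.is_weight_vector_def m2.is_hw_vector_def m2.is_weight_vector_def zero_prod_def)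
  text \<open>On the pair \<open>(x, x')\<close>, \<open>k\<^sub>\<lambda> c\<close> acts by one scalar on both components.\<close>
  have K_same: "act (K_op n r la \<circ> c) x = 0 \<longleftrightarrow> act' (K_op n r la \<circ> c) x' = 0"
    if c: "c \<in> S0 n r" for c
  proof -
    obtain s where "act (K_op n r la \<circ> c) x = sm s x" "act' (K_op n r la \<circ> c) x' = sm' s x'"
      using p.hw_vector_scalar[OF hw c] by auto
    then show ?thesis using x(2) x'(2) by simp
  qed
  show ?thesis
  proof (rule module_iso_of_same_annihilator[OF assms(1,2) xM x(2) x'M x'(2)])
    fix a assume a: "a \<in> S0 n r"
    show "act a x = 0 \<longleftrightarrow> act' a x' = 0"
      unfolding m1.hw_vector_annihilator[OF x a] m2.hw_vector_annihilator[OF x' a]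
      using K_same S0.mult[OF _ a] by blast
  qed
qed

lemma module_iso_hw_vector:
  fixes sm :: "complex \<Rightarrow> 'm::ab_group_add \<Rightarrow> 'm" and sm' :: "complex \<Rightarrow> 'k::ab_group_add \<Rightarrow> 'k"
  assumes "S0_module n r sm M act" and "S0_module n r sm' M' act'"
    and iso: "module_iso n r sm M act sm' M' act'"
    and x: "S0_module.is_hw_vector n r M act la x" "x \<noteq> 0"
  shows "\<exists>x'. S0_module.is_hw_vector n r M' act' la x' \<and> x' \<noteq> 0"
proof -
  interpret m1: S0_module n r sm M act by fact
  interpret m2: S0_module n r sm' M' act' by fact
  obtain f where bij: "bij_betw f M M'"
    and add: "\<And>u v. u \<in> M \<Longrightarrow> v \<in> M \<Longrightarrow> f (u + v) = f u + f v"
    and com: "\<And>a u. a \<in> S0 n r \<Longrightarrow> u \<in> M \<Longrightarrow> f (act a u) = act' a (f u)"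
    using iso unfolding module_iso_def by blast
  have xM: "x \<in> M" using x by (simp add: m1.is_hw_vector_def m1.is_weight_vector_def)
  have f0: "f 0 = 0" using add[OF m1.zero_in_carrier m1.zero_in_carrier] by simp
  have "f x \<noteq> 0"
    using bij_betw_inv_into_left[OF bij] xM m1.zero_in_carrier f0 x(2) by metis
  moreover have "m2.is_hw_vector la (f x)"
    using x xM bij_betwE[OF bij] com[OF K_op_in_S0 xM, of la] com[OF S0.gen_e xM] f0
    by (auto simp: m1.is_hw_vector_def m1.is_weight_vector_def m2.is_hw_vector_def
        m2.is_weight_vector_def)
  ultimately show ?thesis by blast
qed

section \<open>Column block diagonal matrices\<close>

definition col_block_diag :: "mat \<Rightarrow> bool" where
  "col_block_diag A \<longleftrightarrow> (\<forall>i j. 0 < A i j \<longrightarrow> (\<forall>i' s. i' \<le> i \<longrightarrow> j < s \<longrightarrow> A i' s = 0))"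

lemma cb_iff: "cb n r la = {A \<in> mats n r. co n A = la \<and> col_block_diag A}"
  by (auto simp: cb_def col_block_diag_def)

lemma not_col_block_diag:
  "\<not> col_block_diag A \<longleftrightarrow> (\<exists>i j i' s. 0 < A i j \<and> i' \<le> i \<and> j < s \<and> 0 < A i' s)"
  by (auto simp: col_block_diag_def)

lemma not_col_block_diagI: "0 < A i j \<Longrightarrow> i' \<le> i \<Longrightarrow> j < s \<Longrightarrow> 0 < A i' s \<Longrightarrow> \<not> col_block_diag A"
  by (auto simp: col_block_diag_def)

text \<open>Moving one unit destroys a witness \<open>A i j > 0\<close>, \<open>A i' s > 0\<close> (\<open>i' \<le> i\<close>, \<open>j < s\<close>) of
  non block diagonality only by emptying one of its entries, and then the moved unit forms a
  new witness with the other entry.\<close>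

lemma not_col_block_diag_E_move:
  assumes A: "A \<in> mats n r" and nc: "\<not> col_block_diag A"
    and i: "Suc i < n" and rp: "0 < ro n A (Suc i)"
  shows "\<not> col_block_diag (E_move A i)"
proof -
  obtain i0 j0 i1 s where w: "0 < A i0 j0" "i1 \<le> i0" "j0 < s" "0 < A i1 s"
    using nc not_col_block_diag by blast
  obtain jj where jj: "0 < A (Suc i) jj" using rp ro_pos_iff[OF A] by blast
  define p where "p = last_pos A (Suc i)"
  have gp3: "\<And>j. 0 < A (Suc i) j \<Longrightarrow> j \<le> p" using last_pos_props(3)[OF A jj] p_def by simp
  define B where "B = move_unit A (Suc i) p i"
  have BE: "E_move A i = B" by (simp add: E_move_def p_def B_def)
  have ent: "B k l = (if l = p \<and> k = i then Suc (A k l)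
      else if l = p \<and> k = Suc i then A k l - 1 else A k l)" for k l
    by (simp add: move_unit_def B_def)
  have Bip: "0 < B i p" by (simp add: ent)
  have keep: "0 < B k l" if "0 < A k l" "\<not> ((k, l) = (Suc i, p) \<and> A (Suc i) p = 1)" for k l
    using that by (auto simp: ent)
  show ?thesis unfolding BE
  proof (cases "(i0, j0) = (Suc i, p) \<and> A (Suc i) p = 1")
    case True
    have "i1 \<noteq> Suc i"
    proof
      assume "i1 = Suc i"
      then have "s \<le> p" using gp3 w(4) by simp
      then show False using True w(3) by simp
    qed
    then have i1: "i1 \<le> i" using w(2) True by simp
    have ps: "p < s" using True w(3) by simp
    have "0 < B i1 s" using keep[OF w(4)] ps by auto
    then show "\<not> col_block_diag B" using not_col_block_diagI[of B i p i1 s] Bip i1 ps by blast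
  next
    case first_kept: False
    show "\<not> col_block_diag B"
    proof (cases "(i1, s) = (Suc i, p) \<and> A (Suc i) p = 1")
      case True
      have b0: "0 < B i0 j0" using keep[OF w(1)] True w(3) by auto
      have "i \<le> i0" using True w(2) by simp
      moreover have "j0 < p" using True w(3) by simp
      ultimately show ?thesis using not_col_block_diagI[of B i0 j0 i p] b0 Bip by blast
    next
      case False
      then show ?thesis
        using not_col_block_diagI[of B i0 j0 i1 s] keep[OF w(1) first_kept] w(2) w(3) keep[OF w(4)] by metis
    qed
  qed
qed

lemma not_col_block_diag_F_move:
  assumes A: "A \<in> mats n r" and nc: "\<not> col_block_diag A" and i: "Suc i < n" and rp: "0 < ro n A i"
  shows "\<not> col_block_diag (F_move A i)"
proof -
  obtain i0 j0 i1 s where w: "0 < A i0 j0" "i1 \<le> i0" "j0 < s" "0 < A i1 s"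
    using nc not_col_block_diag by blast
  obtain jj where jj: "0 < A i jj" using rp ro_pos_iff[OF A] by blast
  define q where "q = first_pos A i"
  have lp2: "\<And>j. 0 < A i j \<Longrightarrow> q \<le> j" using first_pos_props(2)[of A i jj, OF jj] q_def by simp
  define B where "B = move_unit A i q (Suc i)"
  have BF: "F_move A i = B" by (simp add: F_move_def q_def B_def)
  have ent: "B k l = (if l = q \<and> k = Suc i then Suc (A k l)
      else if l = q \<and> k = i then A k l - 1 else A k l)" for k l
    by (simp add: move_unit_def B_def)
  have Biq: "0 < B (Suc i) q" by (simp add: ent)
  have keep: "0 < B k l" if "0 < A k l" "\<not> ((k, l) = (i, q) \<and> A i q = 1)" for k l
    using that by (auto simp: ent)
  show ?thesis unfolding BF
  proof (cases "(i0, j0) = (i, q) \<and> A i q = 1")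
    case True
    have i1: "i1 \<le> Suc i" using w(2) True by simp
    have qs: "q < s" using True w(3) by simp
    have "0 < B i1 s" using keep[OF w(4)] qs by auto
    then show "\<not> col_block_diag B" using not_col_block_diagI[of B "Suc i" q i1 s] Biq i1 qs by blast
  next
    case first_kept: False
    show "\<not> col_block_diag B"
    proof (cases "(i1, s) = (i, q) \<and> A i q = 1")
      case True
      have "i0 \<noteq> i"
      proof
        assume "i0 = i"
        then have "q \<le> j0" using lp2 w(1) by simp
        then show False using True w(3) by simp
      qed
      then have i0: "Suc i \<le> i0" using w(2) True by simp
      have b0: "0 < B i0 j0" using keep[OF w(1)] \<open>i0 \<noteq> i\<close> by auto
      have "j0 < q" using True w(3) by simp
      then show ?thesis using not_col_block_diagI[of B i0 j0 "Suc i" q] b0 i0 Biq by blast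
    next
      case False
      then show ?thesis
        using not_col_block_diagI[of B i0 j0 i1 s] keep[OF w(1) first_kept] w(2) w(3) keep[OF w(4)] by metis
    qed
  qed
qed

text \<open>In a block of \<open>\<alpha> \<in> max(\<lambda>)\<close> of length at least 2 the first and last columns are
  nonzero, and a column block diagonal matrix occupies the last one strictly below the first, so it
  is not open on that block.\<close>

lemma cb_subset_B_la: "cb n r la \<subseteq> B_la n r la"
proof
  fix A assume "A \<in> cb n r la"
  then have A: "A \<in> mats n r" "co n A = la" "col_block_diag A" by (auto simp: cb_iff)
  have "\<not> open_cols_wrt A al" if al: "al \<in> maxset n la" "al \<noteq> replicate n 1" for al
  proof
    assume op: "open_cols_wrt A al"
    have sc: "\<forall>k\<in>set al. 0 < k" "sum_list al = n"
      using al(1) by (auto simp: maxset_def strong_comps_def)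
    obtain k where k: "k < length al" "al ! k \<noteq> 1"
    proof (rule ccontr)
      assume "\<not> thesis"
      with that have "\<forall>y\<in>set al. y = 1" by (metis in_set_conv_nth)
      then have "replicate (length al) 1 = al" by (rule replicate_length_same)
      moreover from this have "length al = n"
        using sc(2) by (metis sum_list_replicate mult_1_right of_nat_id)
      ultimately show False using al(2) by simp
    qed
    have pos: "0 < al ! k" using sc(1) k(1) by (simp add: nth_mem)
    define s where "s = piece_start al k"
    define t where "t = s + al ! k - 1"
    have st: "s < t" using pos k(2) unfolding t_def by simp
    have cond: "la s \<noteq> 0" "la t \<noteq> 0" using al(1) k unfolding maxset_def s_def t_def by auto
    obtain i where i: "0 < A i s" using cond(1) co_pos_iff[OF A(1), of s] A(2) by auto
    obtain i' where i': "0 < A i' t" using cond(2) co_pos_iff[OF A(1), of t] A(2) by auto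
    have "i < i'"
    proof (rule ccontr)
      assume "\<not> i < i'"
      then have "i' \<le> i" by simp
      then have "A i' t = 0" using A(3) i st unfolding col_block_diag_def by blast
      then show False using i' by simp
    qed
    moreover have "open_on_cols A {s ..< s + al ! k}"
      using op k(1) unfolding open_cols_wrt_def s_def by blast
    ultimately have "A i s * A i' t = 0" using st pos unfolding open_on_cols_def t_def by auto
    then show False using i i' by simp
  qed
  then show "A \<in> B_la n r la" using A unfolding B_la_def B_la_al_def by auto
qed

lemma col_block_diag_row_unique: "col_block_diag A \<Longrightarrow> 0 < A i j \<Longrightarrow> 0 < A i j' \<Longrightarrow> j = j'"
  unfolding col_block_diag_def by (metis less_irrefl linorder_neqE_nat order_refl)

lemma ro_col_block_diag:
  assumes A: "A \<in> mats n r" and c: "col_block_diag A" and p: "0 < A i j"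
  shows "ro n A i = A i j"
proof -
  have j: "j < n" using mats_pos_bound[OF A p] by simp
  have "ro n A i = (\<Sum>l<n. if l = j then A i j else 0)"
    unfolding ro_def
      by (rule sum.cong[OF refl]) (use col_block_diag_row_unique[OF c p] in \<open>auto intro: gr0I\<close>)
  also have "\<dots> = A i j" using j by simp
  finally show ?thesis .
qed

lemma col_sums_before_le_row_sums:
  assumes A: "A \<in> mats n r" and c: "col_block_diag A" and p: "0 < A i j"
  shows "(\<Sum>l<j. co n A l) \<le> (\<Sum>k<i. ro n A k)"
proof -
  have ij: "i < n" "j < n" using mats_pos_bound[OF A p] by auto
  have z: "A k l = 0" if "l < j" "i \<le> k" for k l
  proof (rule ccontr)
    assume "A k l \<noteq> 0"
    then have "0 < A k l" by simp
    then have "A i j = 0" using c that unfolding col_block_diag_def by blast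
    then show False using p by simp
  qed
  have "(\<Sum>l<j. co n A l) = (\<Sum>l<j. \<Sum>k<n. A k l)" by (simp add: co_def)
  also have "\<dots> = (\<Sum>l<j. \<Sum>k<i. A k l)"
    by (rule sum.cong[OF refl], rule sum.mono_neutral_right) (use ij z in auto)
  also have "\<dots> = (\<Sum>k<i. \<Sum>l<j. A k l)" by (rule sum.swap)
  also have "\<dots> \<le> (\<Sum>k<i. \<Sum>l<n. A k l)"
    by (rule sum_mono, rule sum_mono2) (use ij in auto)
  finally show ?thesis by (simp add: ro_def)
qed

lemma row_sums_le_col_sums_upto:
  assumes A: "A \<in> mats n r" and c: "col_block_diag A" and p: "0 < A i j"
  shows "(\<Sum>k<Suc i. ro n A k) \<le> (\<Sum>l<Suc j. co n A l)"
proof -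
  have ij: "i < n" "j < n" using mats_pos_bound[OF A p] by auto
  have z: "A k l = 0" if "k \<le> i" "j < l" for k l
    using c p that unfolding col_block_diag_def by blast
  have "(\<Sum>k<Suc i. ro n A k) = (\<Sum>k<Suc i. \<Sum>l<n. A k l)" by (simp add: ro_def)
  also have "\<dots> = (\<Sum>k<Suc i. \<Sum>l<Suc j. A k l)"
    by (rule sum.cong[OF refl], rule sum.mono_neutral_right) (use ij z in auto)
  also have "\<dots> = (\<Sum>l<Suc j. \<Sum>k<Suc i. A k l)" by (rule sum.swap)
  also have "\<dots> \<le> (\<Sum>l<Suc j. \<Sum>k<n. A k l)"
    by (rule sum_mono, rule sum_mono2) (use ij in auto)
  finally show ?thesis by (simp add: co_def)
qed

lemma col_block_diag_pos_col_le:
  assumes B: "B \<in> mats n r" "col_block_diag B" "0 < B i a"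
    and B': "B' \<in> mats n r" "col_block_diag B'" "0 < B' i b"
    and co: "co n B = co n B'" and ro: "ro n B = ro n B'"
  shows "b \<le> a"
proof (rule ccontr)
  assume "\<not> b \<le> a"
  have "0 < ro n B i" using ro_pos_iff[OF B(1)] B(3) by blast
  have "(\<Sum>k<Suc i. ro n B k) \<le> (\<Sum>l<Suc a. co n B l)" by (rule row_sums_le_col_sums_upto[OF B])
  also have "\<dots> \<le> (\<Sum>l<b. co n B l)" by (rule sum_mono2) (use \<open>\<not> b \<le> a\<close> in auto)
  also have "\<dots> = (\<Sum>l<b. co n B' l)" using co by simp
  also have "\<dots> \<le> (\<Sum>k<i. ro n B' k)" by (rule col_sums_before_le_row_sums[OF B'])
  also have "\<dots> = (\<Sum>k<i. ro n B k)" using ro by simp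
  finally show False using \<open>0 < ro n B i\<close> by simp
qed

lemma col_block_diag_eq:
  assumes A: "A \<in> mats n r" and A': "A' \<in> mats n r"
    and c: "col_block_diag A" and c': "col_block_diag A'"
    and co: "co n A = co n A'" and ro: "ro n A = ro n A'"
  shows "A = A'"
proof (intro ext)
  fix i j
  show "A i j = A' i j"
  proof (cases "0 < ro n A i")
    case False
    then have "A i j = 0" "A' i j = 0"
      using ro_pos_iff[OF A, of i] ro_pos_iff[OF A', of i] ro by auto
    then show ?thesis by simp
  next
    case True
    obtain j1 where j1: "0 < A i j1" using True ro_pos_iff[OF A] by blast
    obtain j2 where j2: "0 < A' i j2" using True ro_pos_iff[OF A'] ro by metis
    have "j1 = j2"
      using col_block_diag_pos_col_le[OF A c j1 A' c' j2 co ro]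
        col_block_diag_pos_col_le[OF A' c' j2 A c j1 co[symmetric] ro[symmetric]] by simp
    then have "A i j1 = A' i j1"
      using ro_col_block_diag[OF A c j1] ro_col_block_diag[OF A' c' j2] ro by metis
    moreover have "A i j = 0 \<and> A' i j = 0" if "j \<noteq> j1"
      using that col_block_diag_row_unique[OF c j1] col_block_diag_row_unique[OF c' j2] \<open>j1 = j2\<close>
      by (auto intro: gr0I)
    ultimately show ?thesis by (cases "j = j1") auto
  qed
qed

definition diag_mat :: "(nat \<Rightarrow> nat) \<Rightarrow> mat" where
  "diag_mat la = (\<lambda>i j. if i = j then la i else 0)"

lemma diag_mat_ro: "la \<in> comps n r \<Longrightarrow> ro n (diag_mat la) = la"
proof
  fix i assume la: "la \<in> comps n r"
  show "ro n (diag_mat la) i = la i"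
  proof (cases "i < n")
    case True then show ?thesis by (simp add: ro_def diag_mat_def)
  next
    case False then show ?thesis using la by (simp add: ro_def diag_mat_def comps_def)
  qed
qed

lemma diag_mat_co: "la \<in> comps n r \<Longrightarrow> co n (diag_mat la) = la"
proof
  fix i assume la: "la \<in> comps n r"
  show "co n (diag_mat la) i = la i"
  proof (cases "i < n")
    case True then show ?thesis by (simp add: co_def diag_mat_def)
  next
    case False then show ?thesis using la by (simp add: co_def diag_mat_def comps_def)
  qed
qed

lemma diag_mat_mats: "la \<in> comps n r \<Longrightarrow> diag_mat la \<in> mats n r"
proof -
  assume la: "la \<in> comps n r"
  have "(\<Sum>i<n. \<Sum>j<n. diag_mat la i j) = (\<Sum>i<n. ro n (diag_mat la) i)" by (simp add: ro_def)
  also have "\<dots> = r" using diag_mat_ro[OF la] la by (simp add: comps_def)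
  finally show ?thesis using la by (auto simp: mats_def diag_mat_def comps_def)
qed

lemma diag_mat_col_block_diag: "col_block_diag (diag_mat la)"
  by (auto simp: col_block_diag_def diag_mat_def split: if_splits)

lemma diag_mat_cb: "la \<in> comps n r \<Longrightarrow> diag_mat la \<in> cb n r la"
  by (simp add: cb_iff diag_mat_mats diag_mat_co diag_mat_col_block_diag)

lemma comps_bullet_pos_mono: "la \<in> comps_bullet n r \<Longrightarrow> i < j \<Longrightarrow> 0 < la j \<Longrightarrow> 0 < la i"
  unfolding comps_bullet_def by (metis (mono_tags, lifting) mem_Collect_eq gr0I)

lemma co_single_entry:
  assumes "l < n" "\<And>k. k \<noteq> l \<Longrightarrow> A k l = 0"
  shows "co n A l = A l l"
proof -
  have "co n A l = (\<Sum>k<n. if k = l then A l l else 0)"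
    unfolding co_def by (rule sum.cong[OF refl]) (use assms in auto)
  also have "\<dots> = A l l" using assms by simp
  finally show ?thesis .
qed

lemma diagonal_eq_diag_mat:
  assumes A: "A \<in> mats n r" and la: "la \<in> comps n r" and co: "co n A = la"
    and off: "\<And>k l. k \<noteq> l \<Longrightarrow> A k l = 0"
  shows "A = diag_mat la"
proof (intro ext)
  fix k l
  show "A k l = diag_mat la k l"
  proof (cases "k = l")
    case True
    have "la l = 0" if "\<not> l < n" using that la by (simp add: comps_def)
    then show ?thesis
      using True co_single_entry[of l n A] off co mats_zero[OF A, of l l]
      by (cases "l < n") (auto simp: diag_mat_def)
  next
    case False
    then show ?thesis using off by (simp add: diag_mat_def)
  qed
qed

text \<open>Let \<open>j\<close> be the first column with an off-diagonal entry.  The columns before it are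
  diagonal and nonzero (\<open>\<lambda>\<close> has no gaps), so the block diagonal shape forbids entries
  above the diagonal in column \<open>j\<close>.\<close>

lemma cb_offdiag_witness:
  assumes la: "la \<in> comps_bullet n r" and Acb: "A \<in> cb n r la" and ne: "A \<noteq> diag_mat la"
  shows "\<exists>j t. j < t \<and> 0 < A t j \<and> (\<forall>k l. l < j \<longrightarrow> k \<noteq> l \<longrightarrow> A k l = 0)"
proof -
  have A: "A \<in> mats n r" "co n A = la" "col_block_diag A" using Acb by (auto simp: cb_iff)
  have ex: "\<exists>j k. k \<noteq> j \<and> 0 < A k j"
  proof (rule ccontr)
    assume "\<not> ?thesis"
    then have "A = diag_mat la"
      using diagonal_eq_diag_mat[OF A(1) _ A(2)] la by (auto simp: comps_bullet_def)
    then show False using ne by simp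
  qed
  define j where "j = (LEAST j. \<exists>k. k \<noteq> j \<and> 0 < A k j)"
  have left: "A k l = 0" if "l < j" "k \<noteq> l" for k l
    using that not_less_Least[of l "\<lambda>j. \<exists>k. k \<noteq> j \<and> 0 < A k j"] unfolding j_def by auto
  obtain t where t: "t \<noteq> j" "0 < A t j"
    using LeastI_ex[OF ex] unfolding j_def[symmetric] by blast
  have "0 < la j" using co_pos_iff[OF A(1), of j] t A(2) by auto
  have diag_pos: "0 < A l l" if "l < j" for l
  proof -
    have "l < n" using that mats_pos_bound[OF A(1) t(2)] by simp
    then have "co n A l = A l l" using co_single_entry left[OF that] by blast
    then show ?thesis using comps_bullet_pos_mono[OF la that \<open>0 < la j\<close>] A(2) by simp
  qed
  have "\<not> t < j"
  proof
    assume "t < j"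
    then have "A t j = 0" using A(3) diag_pos[of t] unfolding col_block_diag_def by blast
    then show False using t(2) by simp
  qed
  then show ?thesis using t left by (intro exI[of _ j] exI[of _ t]) auto
qed

lemma col_block_diag_move_up:
  assumes c: "col_block_diag A" and ji: "j \<le> i" and pos: "0 < A (Suc i) j"
    and left: "\<And>k l. l < j \<Longrightarrow> k \<noteq> l \<Longrightarrow> A k l = 0"
  shows "col_block_diag (move_unit A (Suc i) j i)"
  unfolding col_block_diag_def
proof (intro allI impI)
  let ?A' = "move_unit A (Suc i) j i"
  have ent: "?A' k l = (if l = j \<and> k = i then Suc (A k l)
      else if l = j \<and> k = Suc i then A k l - 1 else A k l)" for k l
    by (simp add: move_unit_def)
  fix k l k' s assume pos': "0 < ?A' k l" and le: "k' \<le> k" and ls: "l < s"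
  show "?A' k' s = 0"
  proof (cases "k = i \<and> l = j")
    case True
    then have "A k' s = 0" using c pos le ls unfolding col_block_diag_def by (metis le_SucI)
    then show ?thesis using ls True by (simp add: ent)
  next
    case False
    have Apos: "0 < A k l" using pos' False by (auto simp: ent split: if_splits)
    have "A k' s = 0" using c Apos le ls unfolding col_block_diag_def by blast
    moreover have "k = l" if "k' = i" "s = j"
      using left[of l k] Apos ls le that by (metis less_irrefl)
    ultimately show ?thesis using ls le ji by (auto simp: ent)
  qed
qed

lemma cb_E_step:
  assumes Acb: "A \<in> cb n r la" and ji: "j \<le> i" and pos: "0 < A (Suc i) j"
    and left: "\<And>k l. l < j \<Longrightarrow> k \<noteq> l \<Longrightarrow> A k l = 0"
  shows "Suc i < n" "0 < ro n A (Suc i)" "E_move A i \<in> cb n r la" "0 < ro n (E_move A i) i"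
    "F_move (E_move A i) i = A"
proof -
  have A: "A \<in> mats n r" "co n A = la" "col_block_diag A" using Acb by (auto simp: cb_iff)
  show i: "Suc i < n" using mats_pos_bound[OF A(1) pos] by simp
  show rt: "0 < ro n A (Suc i)" using ro_pos_iff[OF A(1)] pos by blast
  have row: "A (Suc i) s = 0" if "s \<noteq> j" for s
  proof (cases "s < j")
    case True
    then show ?thesis using left[of s "Suc i"] ji by simp
  next
    case False
    then show ?thesis
      using A(3) pos that unfolding col_block_diag_def by (meson le_refl linorder_neqE_nat)
  qed
  have "last_pos A (Suc i) = j"
    by (rule last_pos_eq[of A "Suc i" j, OF pos]) (use row in \<open>auto intro: ccontr\<close>)
  then have EA: "E_move A i = move_unit A (Suc i) j i" by (simp add: E_move_def)
  show "E_move A i \<in> cb n r la"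
    using EA col_block_diag_move_up[OF A(3) ji pos left] E_move_mats[OF A(1) i rt]
      co_E_move[OF A(1) i rt] A(2) by (simp add: cb_iff)
  show "0 < ro n (E_move A i) i" using ro_E_move[OF A(1) i rt] by (simp add: E_shift_def)
  have "first_pos (move_unit A (Suc i) j i) i = j"
  proof (rule first_pos_eq)
    show "0 < move_unit A (Suc i) j i i j" by (simp add: move_unit_def)
    fix l assume "0 < move_unit A (Suc i) j i i l"
    then show "j \<le> l" using left[of l i] ji by (cases "l < j") (auto simp: move_unit_def)
  qed
  then show "F_move (E_move A i) i = A"
    unfolding EA F_move_def using pos by (simp add: move_unit_back)
qed

lemma cb_descend:
  assumes la: "la \<in> comps_bullet n r" and A: "A \<in> cb n r la" and ne: "A \<noteq> diag_mat la"
  obtains i where "Suc i < n" "0 < ro n A (Suc i)" "E_move A i \<in> cb n r la"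
    "0 < ro n (E_move A i) i" "F_move (E_move A i) i = A"
    "weight_degree n (ro n (E_move A i)) < weight_degree n (ro n A)"
proof -
  obtain j t where "j < t" "0 < A t j" and left: "\<And>k l. l < j \<Longrightarrow> k \<noteq> l \<Longrightarrow> A k l = 0"
    using cb_offdiag_witness[OF assms] by blast
  then obtain i where "j \<le> i" "0 < A (Suc i) j" by (cases t) (auto simp: less_Suc_eq_le)
  note step = cb_E_step[OF A this left]
  have "A \<in> mats n r" using A by (simp add: cb_iff)
  then have "weight_degree n (ro n (E_move A i)) < weight_degree n (ro n A)"
    using ro_E_move weight_degree_E_shift step(1,2) by simp
  with step that show ?thesis by blast
qed

lemma cb_induct_down:
  assumes la: "la \<in> comps_bullet n r" and A: "A \<in> cb n r la" and P: "P A"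
    and step: "\<And>B i. B \<in> cb n r la \<Longrightarrow> P B \<Longrightarrow> Suc i < n \<Longrightarrow> 0 < ro n B (Suc i) \<Longrightarrow>
      E_move B i \<in> cb n r la \<Longrightarrow> P (E_move B i)"
  shows "P (diag_mat la)"
  using A P
proof (induction A rule: measure_induct_rule[of "\<lambda>B. weight_degree n (ro n B)"])
  case (less B)
  show ?case
  proof (cases "B = diag_mat la")
    case True
    then show ?thesis using less by simp
  next
    case False
    then obtain i where "Suc i < n" "0 < ro n B (Suc i)" "E_move B i \<in> cb n r la"
      "weight_degree n (ro n (E_move B i)) < weight_degree n (ro n B)"
      using cb_descend[OF la less.prems(1)] by metis
    then show ?thesis using less step by blast
  qed
qed

lemma cb_induct_up:
  assumes la: "la \<in> comps_bullet n r" and A: "A \<in> cb n r la" and P: "P (diag_mat la)"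
    and step: "\<And>B i. B \<in> cb n r la \<Longrightarrow> P B \<Longrightarrow> Suc i < n \<Longrightarrow> 0 < ro n B i \<Longrightarrow>
      F_move B i \<in> cb n r la \<Longrightarrow> P (F_move B i)"
  shows "P A"
  using A
proof (induction A rule: measure_induct_rule[of "\<lambda>B. weight_degree n (ro n B)"])
  case (less B)
  show ?case
  proof (cases "B = diag_mat la")
    case True
    then show ?thesis using P by simp
  next
    case False
    then obtain i where i: "Suc i < n" "E_move B i \<in> cb n r la" "0 < ro n (E_move B i) i"
      "F_move (E_move B i) i = B" "weight_degree n (ro n (E_move B i)) < weight_degree n (ro n B)"
      using cb_descend[OF la less.prems] by metis
    then show ?thesis using less.IH[OF i(5) i(2)] step[OF i(2) _ i(1) i(3)] less.prems by simp
  qed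
qed

lemma E_move_diag_not_col_block_diag:
  assumes la: "la \<in> comps_bullet n r" and p: "0 < la (Suc i)"
  shows "\<not> col_block_diag (E_move (diag_mat la) i)"
proof -
  have li: "0 < la i" using comps_bullet_pos_mono[OF la _ p] by simp
  have "last_pos (diag_mat la) (Suc i) = Suc i"
    by (rule last_pos_eq) (use p in \<open>auto simp: diag_mat_def split: if_splits\<close>)
  then have e: "E_move (diag_mat la) i = move_unit (diag_mat la) (Suc i) (Suc i) i"
    by (simp add: E_move_def)
  have "0 < move_unit (diag_mat la) (Suc i) (Suc i) i i i"
    using li by (simp add: move_unit_def diag_mat_def)
  moreover have "0 < move_unit (diag_mat la) (Suc i) (Suc i) i i (Suc i)"
    by (simp add: move_unit_def diag_mat_def)
  ultimately show ?thesis unfolding e by (intro not_col_block_diagI[of _ i i i "Suc i"]) auto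
qed

section \<open>The modules \<open>S\<^sub>\<lambda>\<close>\<close>

lemma span_of_zero: "0 \<in> span_of X"
  by (simp add: span_of_def)

lemma span_of_add: "v \<in> span_of X \<Longrightarrow> w \<in> span_of X \<Longrightarrow> v + w \<in> span_of X"
  by (simp add: span_of_def)

lemma span_of_scale: "v \<in> span_of X \<Longrightarrow> fscale c v \<in> span_of X"
  by (simp add: span_of_def)

lemma span_of_sum: "(\<And>a. a \<in> S \<Longrightarrow> f a \<in> span_of X) \<Longrightarrow> (\<Sum>a\<in>S. f a) \<in> span_of X"
  by (induction S rule: infinite_finite_induct) (auto simp: span_of_zero span_of_add)

lemma ebas_in_span_of: "A \<in> X \<Longrightarrow> ebas A \<in> span_of X"
  by (simp add: span_of_def ebas_def)

lemma span_of_mono: "X \<subseteq> Y \<Longrightarrow> span_of X \<subseteq> span_of Y"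
  by (auto simp: span_of_def)

lemma subspace_span_of: "module.subspace fscale (span_of X)"
  by (simp add: module.subspace_def[OF module_fscale] span_of_zero span_of_add span_of_scale)

lemma span_of_eq_sum:
  assumes "finite X" "v \<in> span_of X"
  shows "v = (\<Sum>A\<in>X. fscale (v A) (ebas A))"
proof
  fix B
  have "(\<Sum>A\<in>X. fscale (v A) (ebas A)) B = (\<Sum>A\<in>X. if A = B then v B else 0)"
    by (simp add: sum_fun_apply ebas_def) (rule sum.cong, auto)
  also have "\<dots> = v B" using assms by (auto simp: span_of_def)
  finally show "v B = (\<Sum>A\<in>X. fscale (v A) (ebas A)) B" by simp
qed

lemma proj_in_span_of: "proj X v \<in> span_of X"
  by (simp add: span_of_def proj_def)

lemma proj_id: "v \<in> span_of X \<Longrightarrow> proj X v = v"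
  by (auto simp: span_of_def proj_def fun_eq_iff)

lemma proj_add: "proj X (v + w) = proj X v + proj X w"
  by (simp add: proj_def fun_eq_iff)

lemma proj_scale: "proj X (fscale c v) = fscale c (proj X v)"
  by (simp add: proj_def fun_eq_iff)

lemma proj_disjoint: "v \<in> span_of Y \<Longrightarrow> X \<inter> Y = {} \<Longrightarrow> proj X v = 0"
  by (auto simp: span_of_def proj_def fun_eq_iff)

lemma proj_proj: "proj X (proj Y v) = proj (X \<inter> Y) v"
  by (simp add: proj_def fun_eq_iff)

lemma proj_ebas_notin: "A \<notin> X \<Longrightarrow> proj X (ebas A) = 0"
  by (rule ext) (auto simp: proj_def ebas_def)

lemma lin_ext_span_of_invariant:
  assumes T: "is_lin_ext n r T"
    and W: "\<And>A. A \<in> W \<Longrightarrow> A \<in> mats n r \<Longrightarrow> T (ebas A) \<in> span_of W"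
    and v: "v \<in> span_of W"
  shows "T v \<in> span_of W"
proof -
  have "T v = (\<Sum>A\<in>mats n r. fscale (v A) (T (ebas A)))"
    by (subst is_lin_ext_self[OF T]) (simp add: lin_ext_def)
  also have "\<dots> \<in> span_of W"
  proof (rule span_of_sum)
    fix A assume "A \<in> mats n r"
    then show "fscale (v A) (T (ebas A)) \<in> span_of W"
      using W v by (cases "A \<in> W") (auto simp: span_of_scale span_of_def)
  qed
  finally show ?thesis .
qed

lemma S0_span_of_invariant:
  assumes E: "\<And>A i. A \<in> W \<Longrightarrow> A \<in> mats n r \<Longrightarrow> Suc i < n \<Longrightarrow> 0 < ro n A (Suc i) \<Longrightarrow> E_move A i \<in> W"
    and F: "\<And>A i. A \<in> W \<Longrightarrow> A \<in> mats n r \<Longrightarrow> Suc i < n \<Longrightarrow> 0 < ro n A i \<Longrightarrow> F_move A i \<in> W"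
    and a: "a \<in> S0 n r" and v: "v \<in> span_of W"
  shows "a v \<in> span_of W"
  using a v
proof (induction arbitrary: v rule: S0.induct)
  case zero
  then show ?case by (simp add: span_of_def)
next
  case (gen_k la)
  show ?case
  proof (rule lin_ext_span_of_invariant[OF is_lin_ext_K _ gen_k.prems])
    fix A assume "A \<in> W" "A \<in> mats n r"
    then show "K_op n r la (ebas A) \<in> span_of W"
      by (simp add: K_op_ebas ebas_in_span_of span_of_zero)
  qed
next
  case (gen_e i)
  show ?case
  proof (rule lin_ext_span_of_invariant[OF is_lin_ext_E _ gen_e.prems])
    fix A assume "A \<in> W" "A \<in> mats n r"
    then show "E_op n r i (ebas A) \<in> span_of W"
      using E[of A i] gen_e.hyps by (simp add: E_op_ebas ebas_in_span_of span_of_zero)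
  qed
next
  case (gen_f i)
  show ?case
  proof (rule lin_ext_span_of_invariant[OF is_lin_ext_F _ gen_f.prems])
    fix A assume "A \<in> W" "A \<in> mats n r"
    then show "F_op n r i (ebas A) \<in> span_of W"
      using F[of A i] gen_f.hyps by (simp add: F_op_ebas ebas_in_span_of span_of_zero)
  qed
next
  case (add a b)
  then show ?case by (simp add: span_of_def)
next
  case (smult a c)
  then show ?case by (simp add: span_of_def)
next
  case (mult a b)
  then show ?case by simp
qed

definition col_mats :: "nat \<Rightarrow> nat \<Rightarrow> (nat \<Rightarrow> nat) \<Rightarrow> mat set" where
  "col_mats n r la = {A \<in> mats n r. co n A = la}"

lemma S0_span_of_col_mats_invariant:
  assumes "a \<in> S0 n r" "v \<in> span_of (col_mats n r la)"
  shows "a v \<in> span_of (col_mats n r la)"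
proof (rule S0_span_of_invariant[OF _ _ assms])
  fix A i assume "A \<in> col_mats n r la" "Suc i < n" "0 < ro n A (Suc i)"
  then show "E_move A i \<in> col_mats n r la" by (auto simp: col_mats_def E_move_mats co_E_move)
next
  fix A i assume "A \<in> col_mats n r la" "Suc i < n" "0 < ro n A i"
  then show "F_move A i \<in> col_mats n r la" by (auto simp: col_mats_def F_move_mats co_F_move)
qed

lemma S0_span_of_non_cb_invariant:
  assumes "a \<in> S0 n r" "v \<in> span_of (col_mats n r la - cb n r la)"
  shows "a v \<in> span_of (col_mats n r la - cb n r la)"
proof (rule S0_span_of_invariant[OF _ _ assms])
  fix A i assume "A \<in> col_mats n r la - cb n r la" "Suc i < n" "0 < ro n A (Suc i)"
  then show "E_move A i \<in> col_mats n r la - cb n r la"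
    by (auto simp: col_mats_def cb_iff E_move_mats co_E_move not_col_block_diag_E_move)
next
  fix A i assume "A \<in> col_mats n r la - cb n r la" "Suc i < n" "0 < ro n A i"
  then show "F_move A i \<in> col_mats n r la - cb n r la"
    by (auto simp: col_mats_def cb_iff F_move_mats co_F_move not_col_block_diag_F_move)
qed

lemma cb_subset_mats: "cb n r la \<subseteq> mats n r"
  by (auto simp: cb_iff)

lemma S_carrier_eq: "S_carrier n r la = span_of (cb n r la)"
  using cb_subset_B_la[of n r la] by (simp add: S_carrier_def Int_absorb1)

lemma S_act_eq: "S_act n r la a v = proj (cb n r la) (a v)"
proof -
  have "(B_la n r la \<inter> cb n r la) \<inter> B_la n r la = cb n r la"
    using cb_subset_B_la[of n r la] by blast
  then show ?thesis by (simp add: S_act_def P_act_def proj_proj)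
qed

text \<open>Projecting onto \<open>\<beta>\<^sup>\<lambda>\<close> commutes with the action up to the invariant complement spanned by
  the non column block diagonal matrices; this makes the projected action associative.\<close>

lemma proj_cb_act_proj:
  assumes a: "a \<in> S0 n r" and w: "w \<in> span_of (col_mats n r la)"
  shows "proj (cb n r la) (a w) = proj (cb n r la) (a (proj (cb n r la) w))"
proof -
  let ?X = "cb n r la" and ?Y = "col_mats n r la - cb n r la"
  have "w = proj ?X w + proj ?Y w"
    using w by (auto simp: proj_def span_of_def fun_eq_iff)
  then have "a w = a (proj ?X w) + a (proj ?Y w)"
    by (metis linear_op_add[OF S0_linear[OF a]])
  moreover have "proj ?X (a (proj ?Y w)) = 0"
    by (rule proj_disjoint[OF S0_span_of_non_cb_invariant[OF a proj_in_span_of]]) auto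
  ultimately show ?thesis by (simp add: proj_add)
qed

lemma S0one_span_of: "X \<subseteq> mats n r \<Longrightarrow> v \<in> span_of X \<Longrightarrow> S0one n r v = v"
proof
  fix B assume X: "X \<subseteq> mats n r" and v: "v \<in> span_of X"
  have "S0one n r v B = (\<Sum>A\<in>mats n r. if A = B then v B else 0)"
    unfolding S0one_def lin_ext_apply by (rule sum.cong) (auto simp: ebas_def)
  also have "\<dots> = v B" using finite_mats X v by (auto simp: span_of_def)
  finally show "S0one n r v B = v B" .
qed

lemma S_module: "S0_module n r fscale (S_carrier n r la) (S_act n r la)"
  unfolding S0_module_def is_module_def S_carrier_eq S_act_eq
proof (intro conjI ballI allI)
  show "vector_space fscale" by (rule vector_space_fscale)
  show "module.subspace fscale (span_of (cb n r la))" by (rule subspace_span_of)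
  fix a x assume a: "a \<in> S0 n r" and x: "x \<in> span_of (cb n r la)"
  show "proj (cb n r la) (a x) \<in> span_of (cb n r la)" by (rule proj_in_span_of)
  fix c
  show "proj (cb n r la) (a (fscale c x)) = fscale c (proj (cb n r la) (a x))"
    by (simp add: linear_op_scale[OF S0_linear[OF a]] proj_scale)
  show "proj (cb n r la) ((\<lambda>v. fscale c (a v)) x) = fscale c (proj (cb n r la) (a x))"
    by (simp add: proj_scale del: fscale_apply)
next
  fix x assume x: "x \<in> span_of (cb n r la)"
  show "proj (cb n r la) (S0one n r x) = x"
    using S0one_span_of[OF cb_subset_mats x] proj_id[OF x] by simp
next
  fix a x y assume a: "a \<in> S0 n r"
  show "proj (cb n r la) (a (x + y)) = proj (cb n r la) (a x) + proj (cb n r la) (a y)"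
    by (simp add: linear_op_add[OF S0_linear[OF a]] proj_add del: plus_fun_apply)
next
  fix a b x assume a: "a \<in> S0 n r" and b: "b \<in> S0 n r" and x: "x \<in> span_of (cb n r la)"
  show "proj (cb n r la) ((a + b) x) = proj (cb n r la) (a x) + proj (cb n r la) (b x)"
    by (simp add: proj_def fun_eq_iff)
  have "b x \<in> span_of (col_mats n r la)"
    using S0_span_of_col_mats_invariant[OF b] span_of_mono[of "cb n r la" "col_mats n r la"] x
    by (auto simp: cb_iff col_mats_def)
  then show "proj (cb n r la) ((a \<circ> b) x) = proj (cb n r la) (a (proj (cb n r la) (b x)))"
    using proj_cb_act_proj[OF a] by simp
qed

lemma S_act_E_ebas:
  assumes "A \<in> cb n r la" "0 < ro n A (Suc i)" "E_move A i \<in> cb n r la"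
  shows "S_act n r la (E_op n r i) (ebas A) = ebas (E_move A i)"
proof -
  have "A \<in> mats n r" using assms(1) cb_subset_mats by blast
  then show ?thesis using assms by (simp add: S_act_eq E_op_ebas proj_id ebas_in_span_of)
qed

lemma S_act_F_ebas:
  assumes "A \<in> cb n r la" "0 < ro n A i" "F_move A i \<in> cb n r la"
  shows "S_act n r la (F_op n r i) (ebas A) = ebas (F_move A i)"
proof -
  have "A \<in> mats n r" using assms(1) cb_subset_mats by blast
  then show ?thesis using assms by (simp add: S_act_eq F_op_ebas proj_id ebas_in_span_of)
qed

lemma K_op_apply: "K_op n r mu v B = (if B \<in> mats n r \<and> ro n B = mu then v B else 0)"
proof -
  have "K_op n r mu v B = (\<Sum>A\<in>mats n r. if A = B then (if ro n A = mu then v B else 0) else 0)"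
    unfolding K_op_def lin_ext_apply by (rule sum.cong) (auto simp: ebas_def)
  also have "\<dots> = (if B \<in> mats n r \<and> ro n B = mu then v B else 0)" using finite_mats by simp
  finally show ?thesis .
qed

text \<open>A column block diagonal matrix is determined by its row and column sums, so \<open>k\<^bsub>ro A\<^esub>\<close>
  projects \<open>S\<^sub>\<lambda>\<close> onto the line through \<open>e\<^sub>A\<close>.\<close>

lemma S_act_K_ro:
  assumes z: "z \<in> span_of (cb n r la)" and A: "A \<in> cb n r la"
  shows "S_act n r la (K_op n r (ro n A)) z = fscale (z A) (ebas A)"
proof
  fix B
  have "B = A" if "B \<in> cb n r la" "ro n B = ro n A"
    using col_block_diag_eq[of B n r A] that A by (auto simp: cb_iff)
  then show "S_act n r la (K_op n r (ro n A)) z B = fscale (z A) (ebas A) B"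
    using A cb_subset_mats by (auto simp: S_act_eq proj_def K_op_apply ebas_def)
qed

lemma S_submodule_ebas:
  assumes N: "is_submodule n r fscale (S_carrier n r la) (S_act n r la) N"
    and z: "z \<in> N" "z A \<noteq> 0"
  shows "A \<in> cb n r la" "ebas A \<in> N"
proof -
  interpret S: S0_module n r fscale "S_carrier n r la" "S_act n r la" by (rule S_module)
  have NS: "N \<subseteq> span_of (cb n r la)" and subN: "S.subspace N"
    and closed: "S_act n r la (K_op n r (ro n A)) z \<in> N"
    using N z(1) K_op_in_S0 by (auto simp: is_submodule_def S_carrier_eq)
  show A: "A \<in> cb n r la" using z NS by (auto simp: span_of_def)
  have "fscale (z A) (ebas A) \<in> N"
    using S_act_K_ro[OF _ A] NS z(1) closed by auto
  then have "fscale (1 / z A) (fscale (z A) (ebas A)) \<in> N" by (rule S.subspace_scale[OF subN])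
  then show "ebas A \<in> N" using z(2) by (simp add: fscale_def)
qed

text \<open>From one basis vector \<open>e\<^sub>A\<close>, \<open>A \<in> \<beta>\<^sup>\<lambda>\<close>, the \<open>e\<^sub>i\<close> lead down to \<open>e\<^bsub>D\<^sub>\<lambda>\<^esub>\<close> and the
  \<open>f\<^sub>i\<close> lead from there to every other basis vector of \<open>S\<^sub>\<lambda>\<close>.\<close>

lemma S_submodule_eq:
  assumes la: "la \<in> comps_bullet n r"
    and N: "is_submodule n r fscale (S_carrier n r la) (S_act n r la) N"
    and A: "A \<in> cb n r la" "ebas A \<in> N"
  shows "N = S_carrier n r la"
proof -
  interpret S: S0_module n r fscale "S_carrier n r la" "S_act n r la" by (rule S_module)
  let ?X = "cb n r la"
  have NS: "N \<subseteq> span_of ?X" and subN: "S.subspace N"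
    and closed: "\<And>a x. a \<in> S0 n r \<Longrightarrow> x \<in> N \<Longrightarrow> S_act n r la a x \<in> N"
    using N by (auto simp: is_submodule_def S_carrier_eq)
  have diag: "ebas (diag_mat la) \<in> N"
  proof (rule cb_induct_down[OF la A(1), where P = "\<lambda>B. ebas B \<in> N", OF A(2)])
    fix B i assume "B \<in> ?X" "ebas B \<in> N" "0 < ro n B (Suc i)" "E_move B i \<in> ?X" "Suc i < n"
    then show "ebas (E_move B i) \<in> N" using closed[OF S0.gen_e] S_act_E_ebas by metis
  qed
  have all: "ebas B \<in> N" if "B \<in> ?X" for B
  proof (rule cb_induct_up[OF la that, where P = "\<lambda>B. ebas B \<in> N", OF diag])
    fix B i assume "B \<in> ?X" "ebas B \<in> N" "0 < ro n B i" "F_move B i \<in> ?X" "Suc i < n"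
    then show "ebas (F_move B i) \<in> N" using closed[OF S0.gen_f] S_act_F_ebas by metis
  qed
  have "v \<in> N" if v: "v \<in> span_of ?X" for v
  proof -
    have "(\<Sum>A\<in>?X. fscale (v A) (ebas A)) \<in> N"
      using all S.subspace_scale[OF subN] by (intro S.subspace_sum[OF subN]) auto
    then show ?thesis
      using span_of_eq_sum[OF finite_subset[OF cb_subset_mats finite_mats] v] by simp
  qed
  then show ?thesis using NS S_carrier_eq by auto
qed

lemma S_simple:
  assumes la: "la \<in> comps_bullet n r"
  shows "is_simple_module n r fscale (S_carrier n r la) (S_act n r la)"
proof -
  interpret S: S0_module n r fscale "S_carrier n r la" "S_act n r la" by (rule S_module)
  have "la \<in> comps n r" using la by (simp add: comps_bullet_def)
  then have "ebas (diag_mat la) \<in> S_carrier n r la"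
    using ebas_in_span_of[OF diag_mat_cb] S_carrier_eq by simp
  then have nontriv: "S_carrier n r la \<noteq> {0}" using ebas_neq_zero by blast
  have "N = {0} \<or> N = S_carrier n r la"
    if N: "is_submodule n r fscale (S_carrier n r la) (S_act n r la) N" for N
  proof (cases "N \<subseteq> {0}")
    case True
    then show ?thesis using N S.subspace_0 by (auto simp: is_submodule_def)
  next
    case False
    then obtain z where "z \<in> N" "z \<noteq> 0" by blast
    then obtain A where "z A \<noteq> 0" by (auto simp: fun_eq_iff)
    then show ?thesis using S_submodule_ebas[OF N \<open>z \<in> N\<close>] S_submodule_eq[OF la N] by blast
  qed
  then show ?thesis using S.is_module nontriv by (simp add: is_simple_module_def)
qed

lemma S_hw_vector:
  assumes la: "la \<in> comps_bullet n r"
  shows "S0_module.is_hw_vector n r (S_carrier n r la) (S_act n r la) la (ebas (diag_mat la))"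
proof -
  interpret S: S0_module n r fscale "S_carrier n r la" "S_act n r la" by (rule S_module)
  have lac: "la \<in> comps n r" using la by (simp add: comps_bullet_def)
  have D: "diag_mat la \<in> cb n r la" by (rule diag_mat_cb[OF lac])
  have "S_act n r la (E_op n r i) (ebas (diag_mat la)) = 0" if i: "Suc i < n" for i
  proof (cases "0 < la (Suc i)")
    case True
    have "E_move (diag_mat la) i \<notin> cb n r la"
      using E_move_diag_not_col_block_diag[OF la True] by (auto simp: cb_iff)
    then show ?thesis
      using True diag_mat_mats[OF lac] diag_mat_ro[OF lac]
      by (simp add: S_act_eq E_op_ebas proj_ebas_notin)
  next
    case False
    then show ?thesis using diag_mat_mats[OF lac] diag_mat_ro[OF lac]
      by (simp add: S_act_eq E_op_ebas proj_def zero_fun_def)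
  qed
  moreover have "S_act n r la (K_op n r la) (ebas (diag_mat la)) = ebas (diag_mat la)"
    using S_act_K_ro[OF ebas_in_span_of[OF D] D] diag_mat_ro[OF lac] by (simp add: ebas_def)
  moreover have "ebas (diag_mat la) \<in> S_carrier n r la"
    using ebas_in_span_of[OF D] by (simp add: S_carrier_eq)
  ultimately show ?thesis by (simp add: S.is_hw_vector_def S.is_weight_vector_def)
qed

lemma S_hw_vector_weight:
  assumes mu: "mu \<in> comps_bullet n r"
    and w: "S0_module.is_hw_vector n r (S_carrier n r mu) (S_act n r mu) la w" "w \<noteq> 0"
  shows "la = mu"
proof (rule ccontr)
  interpret S: S0_module n r fscale "S_carrier n r mu" "S_act n r mu" by (rule S_module)
  assume ne: "la \<noteq> mu"
  have "w \<in> S_carrier n r mu" and wK: "S_act n r mu (K_op n r la) w = w"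
    and wE: "\<And>i. Suc i < n \<Longrightarrow> S_act n r mu (E_op n r i) w = 0"
    using w by (auto simp: S.is_hw_vector_def S.is_weight_vector_def)
  then have wS: "w \<in> span_of (cb n r mu)" by (simp add: S_carrier_eq)
  obtain B where wB: "w B \<noteq> 0" using w(2) by (auto simp: fun_eq_iff)
  have "S_act n r mu (K_op n r la) w B \<noteq> 0" using wK wB by simp
  then have B: "B \<in> cb n r mu" "ro n B = la"
    by (auto simp: S_act_eq proj_def K_op_apply split: if_splits)
  have w_eq: "w = fscale (w B) (ebas B)" using S_act_K_ro[OF wS B(1)] B(2) wK by simp
  have "B \<noteq> diag_mat mu" using B(2) diag_mat_ro[of mu n r] mu ne by (auto simp: comps_bullet_def)
  then obtain i where i: "Suc i < n" "0 < ro n B (Suc i)" "E_move B i \<in> cb n r mu"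
    using cb_descend[OF mu B(1)] by metis
  have "S_act n r mu (E_op n r i) w = fscale (w B) (S_act n r mu (E_op n r i) (ebas B))"
    by (subst w_eq)
      (simp add: S_act_eq linear_op_scale[OF linear_op_E] proj_scale del: fscale_apply)
  also have "\<dots> = fscale (w B) (ebas (E_move B i))" using S_act_E_ebas[OF B(1) i(2,3)] by simp
  finally have "S_act n r mu (E_op n r i) w \<noteq> 0" using wB by (auto simp: fun_eq_iff ebas_def)
  then show False using wE[OF i(1)] by simp
qed

theorem mainTheorem4:
  fixes n r :: nat
  shows "(\<forall>la \<in> comps_bullet n r.
            is_simple_module n r fscale (S_carrier n r la) (S_act n r la))
       \<and> (\<forall>la \<in> comps_bullet n r. \<forall>mu \<in> comps_bullet n r.
            module_iso n r fscale (S_carrier n r la) (S_act n r la)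
                           fscale (S_carrier n r mu) (S_act n r mu) \<longrightarrow> la = mu)
       \<and> (\<forall>(sm :: complex \<Rightarrow> 'm::ab_group_add \<Rightarrow> 'm) M act.
            is_simple_module n r sm M act \<longrightarrow>
            (\<exists>la \<in> comps_bullet n r.
               module_iso n r sm M act fscale (S_carrier n r la) (S_act n r la)))"
proof (intro conjI ballI allI impI)
  fix la assume "la \<in> comps_bullet n r"
  then show "is_simple_module n r fscale (S_carrier n r la) (S_act n r la)" by (rule S_simple)
next
  fix la mu assume la: "la \<in> comps_bullet n r" and mu: "mu \<in> comps_bullet n r"
    and iso: "module_iso n r fscale (S_carrier n r la) (S_act n r la)
                               fscale (S_carrier n r mu) (S_act n r mu)"
  obtain w where "S0_module.is_hw_vector n r (S_carrier n r mu) (S_act n r mu) la w" "w \<noteq> 0"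
    using module_iso_hw_vector[OF S_module S_module iso S_hw_vector[OF la] ebas_neq_zero] by blast
  then show "la = mu" by (rule S_hw_vector_weight[OF mu])
next
  fix sm :: "complex \<Rightarrow> 'm::ab_group_add \<Rightarrow> 'm" and M act
  assume simple: "is_simple_module n r sm M act"
  interpret M: simple_S0_module n r sm M act using simple by (rule simple_S0_moduleI)
  obtain x0 where "x0 \<in> M" "x0 \<noteq> 0" using M.simple(1) M.zero_in_carrier by blast
  then obtain la x where x: "M.is_hw_vector la x" "x \<noteq> 0" using M.hw_vector_exists by blast
  have la: "la \<in> comps_bullet n r" by (rule M.hw_vector_weight_in_comps_bullet[OF x])
  have "module_iso n r sm M act fscale (S_carrier n r la) (S_act n r la)"
    by (rule module_iso_of_hw_vectors[OF M.simple_S0_module_axioms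
          simple_S0_moduleI[OF S_simple[OF la]] x S_hw_vector[OF la] ebas_neq_zero])
  then show "\<exists>la \<in> comps_bullet n r.
      module_iso n r sm M act fscale (S_carrier n r la) (S_act n r la)"
    using la by blast
qed

end
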